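(* Let $n,k$ be integers with $2\le k<n/2$. The space of equiangular Gutkin $(n,k)$-gons, modulo the group of similarities, is identified (via the side lengths) with the intersection of an $M$-dimensional affine subspace with the positive orthant $\mathbb{R}^n_+$, where $M$ is the number of integers $r$ with $2\le r\le n-2$ satisfying $$\tan\Big(\frac{kr\pi}{n}\Big)\tan\Big(\frac{\pi}{n}\Big)=\tan\Big(\frac{k\pi}{n}\Big)\tan\Big(\frac{r\pi}{n}\Big).$$
   Context: Let $P$ be a convex $n$-gon in the Euclidean plane with vertices $v_0,\dots,v_{n-1}$ in their cyclic (counterclockwise) order, indices taken modulo $n$. $P$ is a Gutkin $(n,k)$-gon if there exists an angle $\alpha$ such that for every $i$, $\angle v_{i+1}v_iv_{i+k}=\angle v_{i+k-1}v_{i+k}v_i=\alpha$, where $\angle abc$ denotes the angle at $b$ between the segments $ba$ and $bc$. Equiangular means all interior angles are equal; the side lengths are $|v_{i+1}-v_i|$, $0\le i\le n-1$. *)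

theory Defs
  imports Complex_Main
begin

text \<open>Polygons are given by their vertices v 0, ..., v (n-1) as complex numbers
  (points of the Euclidean plane); indices are taken modulo n via vtx.\<close>

definition vtx :: "nat \<Rightarrow> (nat \<Rightarrow> complex) \<Rightarrow> nat \<Rightarrow> complex" where
  "vtx n v i = v (i mod n)"

definition ang :: "complex \<Rightarrow> complex \<Rightarrow> complex \<Rightarrow> real" where
  "ang a b c = arccos (Re (cnj (a - b) * (c - b)) / (cmod (a - b) * cmod (c - b)))"

definition convex_ccw_polygon :: "nat \<Rightarrow> (nat \<Rightarrow> complex) \<Rightarrow> bool" where
  "convex_ccw_polygon n v \<longleftrightarrow> 3 \<le> n \<and>
     (\<forall>i<n. \<forall>j<n. i \<noteq> j \<longrightarrow> v i \<noteq> v j) \<and>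
     (\<forall>i<n. \<forall>j<n. j \<noteq> i \<longrightarrow> j \<noteq> (i + 1) mod n \<longrightarrow>
        Im (cnj (vtx n v (i + 1) - vtx n v i) * (vtx n v j - vtx n v i)) > 0)"

definition interior_angle :: "nat \<Rightarrow> (nat \<Rightarrow> complex) \<Rightarrow> nat \<Rightarrow> real" where
  "interior_angle n v i = ang (vtx n v (i + n - 1)) (vtx n v i) (vtx n v (i + 1))"

definition equiangular :: "nat \<Rightarrow> (nat \<Rightarrow> complex) \<Rightarrow> bool" where
  "equiangular n v \<longleftrightarrow> (\<forall>i<n. \<forall>j<n. interior_angle n v i = interior_angle n v j)"

definition gutkin :: "nat \<Rightarrow> nat \<Rightarrow> (nat \<Rightarrow> complex) \<Rightarrow> bool" where
  "gutkin n k v \<longleftrightarrow> convex_ccw_polygon n v \<and>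
     (\<exists>\<alpha>. \<forall>i<n.
        ang (vtx n v (i + 1)) (vtx n v i) (vtx n v (i + k)) = \<alpha> \<and>
        ang (vtx n v (i + k - 1)) (vtx n v (i + k)) (vtx n v i) = \<alpha>)"

definition side_lengths :: "nat \<Rightarrow> (nat \<Rightarrow> complex) \<Rightarrow> nat \<Rightarrow> real" where
  "side_lengths n v = (\<lambda>i. if i < n then cmod (vtx n v (i + 1) - vtx n v i) else 0)"

text \<open>Similarity of labelled polygons (orientation-preserving similarity z |-> a z + b).\<close>
definition similar_polys :: "nat \<Rightarrow> (nat \<Rightarrow> complex) \<Rightarrow> (nat \<Rightarrow> complex) \<Rightarrow> bool" where
  "similar_polys n v w \<longleftrightarrow> (\<exists>a b. a \<noteq> 0 \<and> (\<forall>i<n. w i = a * v i + b))"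

text \<open>When all tangents are defined it is used literally; otherwise (some cosine vanishes)
  the equation is read after clearing denominators (i.e. in the projective sense).\<close>
definition tan_cond :: "nat \<Rightarrow> nat \<Rightarrow> nat \<Rightarrow> bool" where
  "tan_cond n k r \<longleftrightarrow>
     (let A = real (k * r) * pi / real n; B = real k * pi / real n;
          C = real r * pi / real n; D = pi / real n in
      if cos A \<noteq> 0 \<and> cos B \<noteq> 0 \<and> cos C \<noteq> 0 \<and> cos D \<noteq> 0
      then tan A * tan D = tan B * tan C
      else sin A * cos B * cos C * sin D = cos A * sin B * sin C * cos D)"

definition gutkin_M :: "nat \<Rightarrow> nat \<Rightarrow> nat" where
  "gutkin_M n k = card {r. 2 \<le> r \<and> r \<le> n - 2 \<and> tan_cond n k r}"

definition param_affine :: "(nat \<Rightarrow> real) \<Rightarrow> (nat \<Rightarrow> nat \<Rightarrow> real) \<Rightarrow> nat \<Rightarrow> (nat \<Rightarrow> real) set" where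
  "param_affine p b m = {x. \<exists>c :: nat \<Rightarrow> real. x = (\<lambda>i. p i + (\<Sum>j<m. c j * b j i))}"

end

theory Submission
  imports Defs
begin

text \<open>An equiangular convex \<open>n\<close>-gon has edges \<open>s\<^sub>m u \<omega>\<^sup>m\<close> with \<open>\<omega> = cis (2\<pi>/n)\<close>:
  consecutive edge directions turn by a fixed angle, and convexity forces this angle to be \<open>2\<pi>/n\<close>.
  For such a polygon the two Gutkin angles at the chord \<open>v\<^sub>i v\<^sub>i\<^sub>+\<^sub>k\<close> agree iff
  \<open>\<Sum>j<k. sin ((2j+1-k)\<pi>/n) s\<^sub>i\<^sub>+\<^sub>j = 0\<close>, a circulant linear system in the side lengths.
  Up to a unimodular factor its symbol at frequency \<open>r\<close> is a sine sum which vanishes at \<open>r = 0\<close>,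
  not at \<open>r = \<plusminus>1\<close>, and for \<open>2 \<le> r \<le> n - 2\<close> exactly when the tangent condition holds.
  So the solutions are spanned by the constant vector and the \<open>M\<close> Hartley vectors of these
  frequencies; the closing condition \<open>\<Sum> s\<^sub>m \<omega>\<^sup>m = 0\<close> is then automatic and every positive
  solution is realised by the polygon with these edges. Similar polygons have proportional sides,
  so fixing the perimeter to be \<open>n\<close> leaves an affine subspace of dimension \<open>M\<close>.\<close>

section \<open>The discrete Hartley transform\<close>

lemma cis_add_2pi_int: "cis (x + 2*pi*of_int m) = cis x"
proof -
  have "cis (2*pi*of_int m) = 1" by (rule cis_multiple_2pi) simp
  then show ?thesis by (simp add: cis_mult[symmetric])
qed

lemma cnj_cis_cis: "cnj (cis a) * cis b = cis (b - a)"
  by (simp add: cis_cnj cis_mult)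

lemma sum_cis_roots_of_unity:
  fixes m :: int assumes n: "n > 0"
  shows "(\<Sum>i<n. cis (2*pi*of_int m*real i/real n)) = (if int n dvd m then of_nat n else 0)"
proof -
  define z where "z = cis (2*pi*of_int m/real n)"
  have e: "cis (2*pi*of_int m*real i/real n) = z ^ i" for i
    by (simp add: z_def DeMoivre mult_ac)
  have zn: "z ^ n = 1"
  proof -
    have "z ^ n = cis (2*pi*of_int m)" using n by (simp add: z_def DeMoivre)
    also have "\<dots> = 1" by (rule cis_multiple_2pi) simp
    finally show ?thesis .
  qed
  show ?thesis
  proof cases
    assume "int n dvd m"
    then obtain q where q: "m = int n * q" by (auto simp: dvd_def)
    have "2*pi*of_int m/real n = 2*pi*of_int q" using n by (simp add: q)
    then have "z = 1" unfolding z_def by (metis cis_multiple_2pi Ints_of_int)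
    then show ?thesis using \<open>int n dvd m\<close> by (simp add: e)
  next
    assume nd: "\<not> int n dvd m"
    have "z \<noteq> 1"
    proof
      assume "z = 1"
      then have "cos (2*pi*of_int m/real n) = 1" by (metis z_def cis.sel(1) one_complex.sel(1))
      then obtain q :: int where "2*pi*of_int m/real n = of_int q*2*pi" by (auto simp: cos_one_2pi_int)
      then have "of_int m = real n * of_int q" using n by (simp add: field_simps)
      then have "m = int n * q" by (metis of_int_eq_iff of_int_mult of_int_of_nat_eq)
      then show False using nd by simp
    qed
    then show ?thesis using nd by (simp add: e geometric_sum zn)
  qed
qed

lemma sum_cos_roots_of_unity:
  fixes m :: int assumes n: "n > 0"
  shows "(\<Sum>i<n. cos (2*pi*of_int m*real i/real n)) = (if int n dvd m then real n else 0)"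
proof -
  have "(\<Sum>i<n. cos (2*pi*of_int m*real i/real n)) = Re (\<Sum>i<n. cis (2*pi*of_int m*real i/real n))"
    by (simp add: Re_sum)
  then show ?thesis using sum_cis_roots_of_unity[OF n, of m] by (simp split: if_splits)
qed

lemma sum_sin_roots_of_unity:
  fixes m :: int assumes n: "n > 0"
  shows "(\<Sum>i<n. sin (2*pi*of_int m*real i/real n)) = 0"
proof -
  have "(\<Sum>i<n. sin (2*pi*of_int m*real i/real n)) = Im (\<Sum>i<n. cis (2*pi*of_int m*real i/real n))"
    by (simp add: Im_sum)
  then show ?thesis using sum_cis_roots_of_unity[OF n, of m] by (simp split: if_splits)
qed

text \<open>Since the Gutkin symbol at \<open>n - r\<close> is conjugate to the one at
  \<open>r\<close>, the kernel of the Gutkin system is spanned by the cas vectors of its frequencies.\<close>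

definition hartley :: "nat \<Rightarrow> nat \<Rightarrow> nat \<Rightarrow> real" where
  "hartley n r i = cos (2*pi*real r*real i/real n) + sin (2*pi*real r*real i/real n)"

lemma hartley_commute: "hartley n r i = hartley n i r"
  by (simp add: hartley_def mult_ac)

lemma hartley_mult: "hartley n r i * hartley n q i =
   cos (2*pi*of_int (int r - int q)*real i/real n) + sin (2*pi*of_int (int r + int q)*real i/real n)"
proof -
  define a where "a = 2*pi*real r*real i/real n"
  define b where "b = 2*pi*real q*real i/real n"
  have 1: "2*pi*of_int (int r - int q)*real i/real n = a - b"
    by (simp add: a_def b_def algebra_simps diff_divide_distrib)
  have 2: "2*pi*of_int (int r + int q)*real i/real n = a + b"
    by (simp add: a_def b_def algebra_simps add_divide_distrib)
  show ?thesis unfolding 1 2 hartley_def a_def[symmetric] b_def[symmetric] by (simp add: cos_diff sin_add algebra_simps)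
qed

lemma int_dvd_diff_iff_eq: "r < n \<Longrightarrow> q < n \<Longrightarrow> int n dvd (int r - int q) \<longleftrightarrow> r = q"
proof
  assume "r < n" "q < n" "int n dvd (int r - int q)"
  show "r = q"
  proof (rule ccontr)
    assume "r \<noteq> q"
    then have "int r - int q \<noteq> 0" by simp
    from dvd_imp_le_int[OF this \<open>int n dvd _\<close>] \<open>r<n\<close> \<open>q<n\<close> show False by linarith
  qed
qed simp

lemma hartley_orthogonal:
  assumes "r < n" "q < n"
  shows "(\<Sum>i<n. hartley n r i * hartley n q i) = (if r = q then real n else 0)"
proof -
  have n: "n > 0" using assms by simp
  have "(\<Sum>i<n. hartley n r i * hartley n q i) = (\<Sum>i<n. cos (2*pi*of_int (int r - int q)*real i/real n))
      + (\<Sum>i<n. sin (2*pi*of_int (int r + int q)*real i/real n))"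
    by (simp add: hartley_mult sum.distrib)
  also have "\<dots> = (if r = q then real n else 0)"
    by (subst sum_cos_roots_of_unity[OF n], subst sum_sin_roots_of_unity[OF n]) (simp add: int_dvd_diff_iff_eq[OF assms])
  finally show ?thesis .
qed

lemma hartley_inversion:
  assumes "i < n"
  shows "f i = (\<Sum>r<n. (\<Sum>j<n. f j * hartley n r j) * hartley n r i) / real n"
proof -
  have "(\<Sum>r<n. (\<Sum>j<n. f j * hartley n r j) * hartley n r i) = (\<Sum>j<n. f j * (\<Sum>r<n. hartley n j r * hartley n i r))"
    unfolding sum_distrib_left sum_distrib_right
    by (subst sum.swap) (simp add: hartley_commute[of n _ j for j] mult_ac)
  also have "\<dots> = (\<Sum>j<n. f j * (if j = i then real n else 0))"
    by (intro sum.cong refl) (simp add: hartley_orthogonal assms)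
  also have "\<dots> = f i * real n" using assms by (simp add: if_distrib cong: if_cong)
  finally show ?thesis using assms by simp
qed

lemma hartley_0 [simp]: "hartley n 0 i = 1"
  by (simp add: hartley_def)

lemma sum_hartley_eq_0: "r < n \<Longrightarrow> r \<noteq> 0 \<Longrightarrow> (\<Sum>i<n. hartley n r i) = 0"
  using hartley_orthogonal[of r n 0] by simp

section \<open>The Gutkin system and its symbol\<close>

text \<open>For a polygon with edges \<open>s\<^sub>m u \<omega>\<^sup>m\<close>, the Gutkin condition at vertex \<open>i\<close> is the linear
  equation \<open>gutkin_form n k s i = 0\<close>; \<open>gutkin_symbol n k r\<close> is the eigenvalue of this circulant
  on the Fourier mode \<open>r\<close>.\<close>

definition gutkin_node :: "nat \<Rightarrow> nat \<Rightarrow> nat \<Rightarrow> real" where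
  "gutkin_node n k j = (2*real j + 1 - real k)*pi/real n"

definition gutkin_weight :: "nat \<Rightarrow> nat \<Rightarrow> nat \<Rightarrow> real" where
  "gutkin_weight n k j = sin (gutkin_node n k j)"

definition gutkin_form :: "nat \<Rightarrow> nat \<Rightarrow> (nat \<Rightarrow> real) \<Rightarrow> nat \<Rightarrow> real" where
  "gutkin_form n k s i = (\<Sum>j<k. gutkin_weight n k j * s ((i+j) mod n))"

definition gutkin_symbol :: "nat \<Rightarrow> nat \<Rightarrow> nat \<Rightarrow> complex" where
  "gutkin_symbol n k r = (\<Sum>j<k. complex_of_real (gutkin_weight n k j) * cis (2*pi*real r*real j/real n))"

lemma cis_mod:
  assumes "n > 0" and xint: "x \<in> \<int>"
  shows "cis (2*pi*x*real (m mod n)/real n) = cis (2*pi*x*real m/real n)"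
proof -
  obtain q where q: "x = of_int q" using xint by (auto elim: Ints_cases)
  have "real m = real (n * (m div n) + m mod n)" by (simp only: mult.commute[of n] div_mult_mod_eq)
  then have "real m = real n * real (m div n) + real (m mod n)" by (simp only: of_nat_add of_nat_mult)
  then have "2*pi*x*real m/real n = 2*pi*x*real (m mod n)/real n + 2*pi*of_int (q * int (m div n))"
    using assms by (simp add: q field_simps)
  note eq = this
  show ?thesis unfolding eq cis_add_2pi_int by (rule refl)
qed

lemma cis_mod_nat: "n > 0 \<Longrightarrow> cis (2*pi*real (m mod n)/real n) = cis (2*pi*real m/real n)"
  using cis_mod[of n 1 m] by simp

lemma hartley_mod:
  assumes "n > 0" shows "hartley n r (m mod n) = hartley n r m"
proof -
  have "cis (2*pi*real r*real (m mod n)/real n) = cis (2*pi*real r*real m/real n)"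
    by (rule cis_mod[OF assms]) simp
  then have "cos (2*pi*real r*real (m mod n)/real n) = cos (2*pi*real r*real m/real n)"
       "sin (2*pi*real r*real (m mod n)/real n) = sin (2*pi*real r*real m/real n)"
    by (metis cis.sel(1), metis cis.sel(2))
  then show ?thesis by (simp add: hartley_def)
qed

lemma sum_rotate_mod:
  fixes j n :: nat and g :: "nat \<Rightarrow> 'a::comm_monoid_add"
  assumes "n > 0"
  shows "(\<Sum>i<n. g ((i + j) mod n)) = (\<Sum>i<n. (g i :: 'a::comm_monoid_add))"
proof (induction j arbitrary: g)
  case 0
  show ?case by (intro sum.cong refl) simp
next
  case (Suc j)
  have one: "(\<Sum>i<n. h ((i + 1) mod n)) = (\<Sum>i<n. h i)" for h :: "nat \<Rightarrow> 'a"
  proof -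
    obtain m where m: "n = Suc m" using assms by (cases n) auto
    have "(\<Sum>i<n. h ((i + 1) mod n)) = (\<Sum>i<m. h (i+1)) + h 0"
      unfolding m by (simp add: sum.lessThan_Suc)
    also have "\<dots> = (\<Sum>i<n. h i)" unfolding m by (subst sum.lessThan_Suc_shift) (simp add: add.commute)
    finally show ?thesis .
  qed
  have "(\<Sum>i<n. g ((i + Suc j) mod n)) = (\<Sum>i<n. (\<lambda>x. g ((x+1) mod n)) ((i + j) mod n))"
    by (intro sum.cong refl) (simp add: mod_Suc_eq)
  also have "\<dots> = (\<Sum>i<n. g ((i+1) mod n))" by (rule Suc.IH)
  also have "\<dots> = (\<Sum>i<n. g i)" by (rule one)
  finally show ?case .
qed

lemma gutkin_form_hartley:
  assumes n: "n > 0" and "gutkin_symbol n k r = 0"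
  shows "gutkin_form n k (hartley n r) i = 0"
proof -
  have "gutkin_form n k (hartley n r) i = (\<Sum>j<k. gutkin_weight n k j * hartley n r (i+j))"
    unfolding gutkin_form_def by (simp add: hartley_mod[OF n])
  also have "\<dots> = Re ((1 - \<i>) * cis (2*pi*real r*real i/real n) * gutkin_symbol n k r)"
  proof -
    have "Re ((1 - \<i>) * cis (2*pi*real r*real i/real n) * (complex_of_real (gutkin_weight n k j) * cis (2*pi*real r*real j/real n)))
       = gutkin_weight n k j * hartley n r (i+j)" for j
    proof -
      have e: "2*pi*real r*real i/real n + 2*pi*real r*real j/real n = 2*pi*real r*real (i+j)/real n"
        unfolding add_divide_distrib[symmetric] by (simp add: algebra_simps)
      have "(1 - \<i>) * cis (2*pi*real r*real i/real n) * (complex_of_real (gutkin_weight n k j) * cis (2*pi*real r*real j/real n))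
          = complex_of_real (gutkin_weight n k j) * ((1 - \<i>) * cis (2*pi*real r*real (i+j)/real n))"
      proof -
        have c: "cis (2*pi*real r*real i/real n) * cis (2*pi*real r*real j/real n) = cis (2*pi*real r*real (i+j)/real n)"
          by (simp only: cis_mult e)
        show ?thesis by (subst c[symmetric]) (simp only: ac_simps)
      qed
      then show ?thesis by (simp only:) (simp add: hartley_def)
    qed
    note T = this
    show ?thesis unfolding gutkin_symbol_def sum_distrib_left Re_sum
      by (intro sum.cong refl) (rule T[symmetric])
  qed
  finally show ?thesis using assms by simp
qed

lemma dft_gutkin_form:
  assumes n: "n > 0"
  shows "(\<Sum>i<n. complex_of_real (gutkin_form n k s i) * cis (-2*pi*real r*real i/real n))
    = gutkin_symbol n k r * (\<Sum>i<n. complex_of_real (s i) * cis (-2*pi*real r*real i/real n))"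
proof -
  have inner: "(\<Sum>i<n. complex_of_real (s ((i+j) mod n)) * cis (-2*pi*real r*real i/real n))
      = cis (2*pi*real r*real j/real n) * (\<Sum>i<n. complex_of_real (s i) * cis (-2*pi*real r*real i/real n))" for j
  proof -
    have "(\<Sum>i<n. complex_of_real (s ((i+j) mod n)) * cis (-2*pi*real r*real i/real n))
       = (\<Sum>i<n. cis (2*pi*real r*real j/real n) * (complex_of_real (s ((i+j) mod n)) * cis (2*pi*(- real r)*real ((i+j) mod n)/real n)))"
    proof (intro sum.cong refl)
      fix i
      have "cis (2*pi*(- real r)*real ((i+j) mod n)/real n) = cis (2*pi*(- real r)*real (i+j)/real n)"
        by (rule cis_mod[OF n]) simp
      moreover have "cis (2*pi*real r*real j/real n) * cis (2*pi*(- real r)*real (i+j)/real n) = cis (-2*pi*real r*real i/real n)"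
        unfolding cis_mult add_divide_distrib[symmetric] by (simp add: algebra_simps)
      ultimately show "complex_of_real (s ((i+j) mod n)) * cis (-2*pi*real r*real i/real n) =
          cis (2*pi*real r*real j/real n) * (complex_of_real (s ((i+j) mod n)) * cis (2*pi*(- real r)*real ((i+j) mod n)/real n))"
        by (metis mult.left_commute)
    qed
    also have "\<dots> = cis (2*pi*real r*real j/real n) * (\<Sum>i<n. (\<lambda>m. complex_of_real (s m) * cis (2*pi*(- real r)*real m/real n)) ((i+j) mod n))"
      by (simp add: sum_distrib_left)
    also have "\<dots> = cis (2*pi*real r*real j/real n) * (\<Sum>i<n. complex_of_real (s i) * cis (-2*pi*real r*real i/real n))"
      by (subst sum_rotate_mod[OF n]) simp
    finally show ?thesis .
  qed
  have "(\<Sum>i<n. complex_of_real (gutkin_form n k s i) * cis (-2*pi*real r*real i/real n))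
     = (\<Sum>j<k. complex_of_real (gutkin_weight n k j) * (\<Sum>i<n. complex_of_real (s ((i+j) mod n)) * cis (-2*pi*real r*real i/real n)))"
    unfolding gutkin_form_def of_real_sum of_real_mult sum_distrib_right sum_distrib_left
    by (subst sum.swap) (simp only: mult.assoc)
  also have "\<dots> = gutkin_symbol n k r * (\<Sum>i<n. complex_of_real (s i) * cis (-2*pi*real r*real i/real n))"
    unfolding inner gutkin_symbol_def sum_distrib_right by (simp only: mult.assoc)
  finally show ?thesis .
qed

lemma hartley_coeff_eq_0:
  assumes n: "n > 0" and g: "\<And>i. i < n \<Longrightarrow> gutkin_form n k s i = 0" and m: "gutkin_symbol n k r \<noteq> 0"
  shows "(\<Sum>j<n. s j * hartley n r j) = 0"
proof -
  define sh where "sh = (\<Sum>i<n. complex_of_real (s i) * cis (-2*pi*real r*real i/real n))"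
  have "gutkin_symbol n k r * sh = 0"
    unfolding sh_def dft_gutkin_form[OF n, symmetric] by (simp add: g)
  then have "sh = 0" using m by simp
  then have "Re sh - Im sh = 0" by simp
  moreover have "Re sh - Im sh = (\<Sum>j<n. s j * hartley n r j)"
    unfolding sh_def Re_sum Im_sum sum_subtractf[symmetric]
    by (intro sum.cong refl) (simp add: hartley_def algebra_simps)
  ultimately show ?thesis by simp
qed

section \<open>Zeros of the symbol\<close>

lemma gutkin_node_reverse: "j < k \<Longrightarrow> gutkin_node n k (k - Suc j) = - gutkin_node n k j"
  by (cases "n = 0") (simp_all add: gutkin_node_def of_nat_diff field_simps)

lemma sum_sin_cos_gutkin_node: "(\<Sum>j<k. sin (gutkin_node n k j) * cos (x * gutkin_node n k j)) = 0"
proof -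
  let ?S = "(\<Sum>j<k. sin (gutkin_node n k j) * cos (x * gutkin_node n k j))"
  have "?S = (\<Sum>j<k. sin (gutkin_node n k (k - Suc j)) * cos (x * gutkin_node n k (k - Suc j)))"
    by (rule sum.nat_diff_reindex[symmetric])
  also have "\<dots> = (\<Sum>j<k. - (sin (gutkin_node n k j) * cos (x * gutkin_node n k j)))"
    by (intro sum.cong refl) (simp add: gutkin_node_reverse)
  also have "\<dots> = - ?S" by (simp add: sum_negf)
  finally show ?thesis by simp
qed

definition gutkin_sine_sum :: "nat \<Rightarrow> nat \<Rightarrow> real \<Rightarrow> real" where
  "gutkin_sine_sum n k x = (\<Sum>j<k. sin (gutkin_node n k j) * sin (x * gutkin_node n k j))"

lemma gutkin_symbol_eq: "gutkin_symbol n k r = cis (real r*(real k - 1)*pi/real n) * (\<i> * complex_of_real (gutkin_sine_sum n k (real r)))"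
proof -
  have "gutkin_symbol n k r = (\<Sum>j<k. cis (real r*(real k - 1)*pi/real n) * (complex_of_real (sin (gutkin_node n k j)) * cis (real r * gutkin_node n k j)))"
    unfolding gutkin_symbol_def
  proof (intro sum.cong refl)
    fix j
    have "cis (real r*(real k - 1)*pi/real n) * cis (real r * gutkin_node n k j) = cis (2*pi*real r*real j/real n)"
      unfolding cis_mult gutkin_node_def by (rule arg_cong[where f=cis]) (cases "n = 0", simp_all add: field_simps)
    then show "complex_of_real (gutkin_weight n k j) * cis (2*pi*real r*real j/real n) =
      cis (real r*(real k - 1)*pi/real n) * (complex_of_real (sin (gutkin_node n k j)) * cis (real r * gutkin_node n k j))"
      by (simp add: gutkin_weight_def gutkin_node_def mult_ac)
  qed
  also have "\<dots> = cis (real r*(real k - 1)*pi/real n) * (\<Sum>j<k. complex_of_real (sin (gutkin_node n k j)) * cis (real r * gutkin_node n k j))"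
    by (simp add: sum_distrib_left)
  also have "(\<Sum>j<k. complex_of_real (sin (gutkin_node n k j)) * cis (real r * gutkin_node n k j)) = \<i> * complex_of_real (gutkin_sine_sum n k (real r))"
  proof (rule complex_eqI)
    show "Re (\<Sum>j<k. complex_of_real (sin (gutkin_node n k j)) * cis (real r * gutkin_node n k j)) = Re (\<i> * complex_of_real (gutkin_sine_sum n k (real r)))"
      using sum_sin_cos_gutkin_node[where n=n and k=k and x="real r"] by (simp add: Re_sum)
    show "Im (\<Sum>j<k. complex_of_real (sin (gutkin_node n k j)) * cis (real r * gutkin_node n k j)) = Im (\<i> * complex_of_real (gutkin_sine_sum n k (real r)))"
      by (simp add: Im_sum gutkin_sine_sum_def)
  qed
  finally show ?thesis .
qed

lemma gutkin_symbol_eq_0_iff_sine_sum: "gutkin_symbol n k r = 0 \<longleftrightarrow> gutkin_sine_sum n k (real r) = 0"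
  by (simp add: gutkin_symbol_eq)

lemma sin_mult_sum_cos_gutkin_node:
  "sin (x*pi/real n) * (\<Sum>j<k. cos (x * gutkin_node n k j)) = sin (x*real k*pi/real n)"
proof -
  define F where "F j = sin (x*(2*real j - real k)*pi/real n)" for j :: nat
  have t: "2 * sin (x*pi/real n) * cos (x * gutkin_node n k j) = F (Suc j) - F j" for j
  proof -
    have 1: "x*(2*real (Suc j) - real k)*pi/real n = x * gutkin_node n k j + x*pi/real n"
      by (cases "n = 0") (simp_all add: gutkin_node_def field_simps)
    have 2: "x*(2*real j - real k)*pi/real n = x * gutkin_node n k j - x*pi/real n"
      by (cases "n = 0") (simp_all add: gutkin_node_def field_simps)
    show ?thesis unfolding F_def 1 2 by (simp add: sin_add sin_diff)
  qed
  have "2 * (sin (x*pi/real n) * (\<Sum>j<k. cos (x * gutkin_node n k j))) = (\<Sum>j<k. F (Suc j) - F j)"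
    by (simp add: sum_distrib_left t[symmetric] mult.assoc)
  also have "\<dots> = F k - F 0" by (rule sum_lessThan_telescope)
  also have "\<dots> = 2 * sin (x*real k*pi/real n)"
  proof -
    have "x*(2*real k - real k)*pi/real n = x*real k*pi/real n" by simp
    moreover have "x*(2*real 0 - real k)*pi/real n = - (x*real k*pi/real n)" by simp
    ultimately show ?thesis unfolding F_def by simp
  qed
  finally show ?thesis by simp
qed

lemma gutkin_sine_sum_eq_cos_sums: "2 * gutkin_sine_sum n k x = (\<Sum>j<k. cos ((x - 1) * gutkin_node n k j)) - (\<Sum>j<k. cos ((x + 1) * gutkin_node n k j))"
proof -
  have "2 * (sin t * sin (x * t)) = cos ((x - 1) * t) - cos ((x + 1) * t)" for t
    by (simp add: algebra_simps cos_diff cos_add)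
  then show ?thesis unfolding gutkin_sine_sum_def sum_distrib_left sum_subtractf[symmetric] by simp
qed

lemma sin_pi_fraction_pos: "0 < m \<Longrightarrow> m < n \<Longrightarrow> sin (real m * pi / real n) > 0"
  by (rule sin_gt_zero) (auto simp: field_simps)

lemma gutkin_sine_sum_mult_sin_sin:
  "gutkin_sine_sum n k (real r) * (sin ((real r - 1)*pi/real n) * sin ((real r + 1)*pi/real n)) =
    sin (real (k*r)*pi/real n) * cos (real k*pi/real n) * cos (real r*pi/real n) * sin (pi/real n)
    - cos (real (k*r)*pi/real n) * sin (real k*pi/real n) * sin (real r*pi/real n) * cos (pi/real n)"
proof -
  define s1 where "s1 = sin ((real r - 1)*pi/real n)"
  define s2 where "s2 = sin ((real r + 1)*pi/real n)"
  have d1: "s1 * (\<Sum>j<k. cos ((real r - 1) * gutkin_node n k j)) = sin ((real r - 1)*real k*pi/real n)"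
    unfolding s1_def by (rule sin_mult_sum_cos_gutkin_node)
  have d2: "s2 * (\<Sum>j<k. cos ((real r + 1) * gutkin_node n k j)) = sin ((real r + 1)*real k*pi/real n)"
    unfolding s2_def by (rule sin_mult_sum_cos_gutkin_node)
  define A where "A = real (k*r)*pi/real n"
  define B where "B = real k*pi/real n"
  define C where "C = real r*pi/real n"
  define D where "D = pi/real n"
  have e1: "(real r - 1)*real k*pi/real n = A - B" by (cases "n = 0") (simp_all add: A_def B_def field_simps)
  have e2: "(real r + 1)*real k*pi/real n = A + B" by (cases "n = 0") (simp_all add: A_def B_def field_simps)
  have e3: "(real r - 1)*pi/real n = C - D" by (cases "n = 0") (simp_all add: C_def D_def field_simps)
  have e4: "(real r + 1)*pi/real n = C + D" by (cases "n = 0") (simp_all add: C_def D_def field_simps)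
  have "2 * gutkin_sine_sum n k (real r) * (s1 * s2) = s2 * (s1 * (\<Sum>j<k. cos ((real r - 1) * gutkin_node n k j)))
      - s1 * (s2 * (\<Sum>j<k. cos ((real r + 1) * gutkin_node n k j)))"
    unfolding gutkin_sine_sum_eq_cos_sums by (simp add: algebra_simps)
  also have "\<dots> = sin (C + D) * sin (A - B) - sin (C - D) * sin (A + B)"
    unfolding d1 d2 unfolding e1 e2 s1_def s2_def e3 e4 by simp
  also have "\<dots> = 2 * (sin A * cos B * cos C * sin D - cos A * sin B * sin C * cos D)"
    by (simp add: sin_add sin_diff algebra_simps)
  finally show ?thesis unfolding s1_def s2_def A_def B_def C_def D_def by simp
qed

lemma tan_cond_iff_sin_cos:
  "tan_cond n k r \<longleftrightarrow>
    sin (real (k*r)*pi/real n) * cos (real k*pi/real n) * cos (real r*pi/real n) * sin (pi/real n)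
    - cos (real (k*r)*pi/real n) * sin (real k*pi/real n) * sin (real r*pi/real n) * cos (pi/real n) = 0"
proof -
  define A where "A = real (k*r)*pi/real n"
  define B where "B = real k*pi/real n"
  define C where "C = real r*pi/real n"
  define D where "D = pi/real n"
  have "tan_cond n k r \<longleftrightarrow> (if cos A \<noteq> 0 \<and> cos B \<noteq> 0 \<and> cos C \<noteq> 0 \<and> cos D \<noteq> 0
      then tan A * tan D = tan B * tan C
      else sin A * cos B * cos C * sin D = cos A * sin B * sin C * cos D)"
    unfolding tan_cond_def Let_def A_def B_def C_def D_def by (simp add: mult.commute)
  also have "\<dots> \<longleftrightarrow> sin A * cos B * cos C * sin D - cos A * sin B * sin C * cos D = 0"
    by (auto simp: tan_def field_simps)
  finally show ?thesis unfolding A_def B_def C_def D_def .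
qed

lemma gutkin_symbol_reflect: "gutkin_symbol n k (n - r) = cnj (gutkin_symbol n k r)" if "r \<le> n" "n > 0"
proof -
  have "cis (2*pi*real (n - r)*real j/real n) = cnj (cis (2*pi*real r*real j/real n))" for j
  proof -
    have "2*pi*real (n - r)*real j/real n = - (2*pi*real r*real j/real n) + 2*pi*of_int (int j)"
      using that by (simp add: of_nat_diff field_simps)
    note eq = this
    show ?thesis unfolding eq cis_add_2pi_int cis_cnj by (rule refl)
  qed
  then show ?thesis unfolding gutkin_symbol_def by (simp add: cnj_sum)
qed

lemma gutkin_sine_sum_1_pos:
  assumes "2 \<le> k" "k < n"
  shows "gutkin_sine_sum n k 1 > 0"
proof -
  have "sin (real (k - 1) * pi / real n) > 0" by (rule sin_pi_fraction_pos) (use assms in auto)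
  moreover have "gutkin_node n k 0 = - (real (k - 1) * pi / real n)"
    using assms by (simp add: gutkin_node_def of_nat_diff field_simps)
  ultimately have "0 < sin (gutkin_node n k 0) * sin (1 * gutkin_node n k 0)"
    by (simp add: not_square_less_zero less_le)
  also have "\<dots> \<le> gutkin_sine_sum n k 1" unfolding gutkin_sine_sum_def
    by (rule member_le_sum) (use assms in auto)
  finally show ?thesis .
qed

lemma gutkin_symbol_eq_0_iff_tan_cond:
  assumes "2 \<le> r" "r + 2 \<le> n"
  shows "gutkin_symbol n k r = 0 \<longleftrightarrow> tan_cond n k r"
proof -
  have "sin ((real r - 1)*pi/real n) > 0"
    using sin_pi_fraction_pos[of "r - 1" n] assms by (simp add: of_nat_diff)
  moreover have "sin ((real r + 1)*pi/real n) > 0"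
    using sin_pi_fraction_pos[of "r + 1" n] assms by (simp add: add.commute)
  ultimately have "sin ((real r - 1)*pi/real n) * sin ((real r + 1)*pi/real n) \<noteq> 0"
    by simp
  then have "gutkin_symbol n k r = 0 \<longleftrightarrow>
      gutkin_sine_sum n k (real r) * (sin ((real r - 1)*pi/real n) * sin ((real r + 1)*pi/real n)) = 0"
    by (simp add: gutkin_symbol_eq_0_iff_sine_sum)
  also have "\<dots> \<longleftrightarrow> tan_cond n k r"
    unfolding gutkin_sine_sum_mult_sin_sin tan_cond_iff_sin_cos ..
  finally show ?thesis .
qed

lemma gutkin_symbol_eq_0_iff:
  assumes k: "2 \<le> k" "2*k < n" and r: "r < n"
  shows "gutkin_symbol n k r = 0 \<longleftrightarrow> r = 0 \<or> (2 \<le> r \<and> r \<le> n - 2 \<and> tan_cond n k r)"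
proof -
  have Q1: "gutkin_sine_sum n k 1 > 0" using k by (intro gutkin_sine_sum_1_pos) auto
  consider "r = 0" | "r = 1" | "r = n - 1" | "2 \<le> r \<and> r \<le> n - 2" using r k by linarith
  then show ?thesis
  proof cases
    case 1 then show ?thesis by (simp add: gutkin_symbol_eq_0_iff_sine_sum gutkin_sine_sum_def)
  next
    case 2 then show ?thesis using Q1 by (simp add: gutkin_symbol_eq_0_iff_sine_sum)
  next
    case 3
    have "gutkin_symbol n k r = cnj (gutkin_symbol n k 1)" using gutkin_symbol_reflect[of 1 n k] 3 k by simp
    then show ?thesis using Q1 3 k by (simp add: gutkin_symbol_eq_0_iff_sine_sum)
  next
    case 4
    then show ?thesis using gutkin_symbol_eq_0_iff_tan_cond[of r n k] by auto
  qed
qed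

section \<open>Edges of convex equiangular polygons\<close>

definition edge :: "nat \<Rightarrow> (nat \<Rightarrow> complex) \<Rightarrow> nat \<Rightarrow> complex" where
  "edge n v i = vtx n v (Suc i) - vtx n v i"

lemma vtx_mod: "vtx n v (i mod n) = vtx n v i" by (simp add: vtx_def)
lemma vtx_add_n: "vtx n v (i + n) = vtx n v i" by (simp add: vtx_def)
lemma edge_mod: "edge n v (i mod n) = edge n v i" by (simp add: edge_def vtx_def mod_Suc_eq)
lemma edge_add_n: "edge n v (i + n) = edge n v i"
proof -
  have "Suc (i + n) = Suc i + n" by simp
  then show ?thesis by (simp only: edge_def vtx_add_n)
qed

lemma vtx_diff_sum_edges: "vtx n v (i + d) - vtx n v i = (\<Sum>t<d. edge n v (i + t))"
proof (induction d)
  case 0 show ?case by simp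
next
  case (Suc d)
  have "vtx n v (i + Suc d) - vtx n v i = (vtx n v (i+d) - vtx n v i) + edge n v (i+d)"
    by (simp add: edge_def)
  then show ?case using Suc.IH by simp
qed

lemma add_2_mod_neq: "i < n \<Longrightarrow> 3 \<le> n \<Longrightarrow> (i+2) mod n \<noteq> i \<and> (i+2) mod n \<noteq> Suc i mod n"
  by (cases "i + 2 < n"; cases "i + 2 = n"; auto simp: mod_if)

lemma convex_left_of_edge:
  assumes "convex_ccw_polygon n v" "i < n" "j < n" "j \<noteq> i" "j \<noteq> Suc i mod n"
  shows "Im (cnj (edge n v i) * (vtx n v j - vtx n v i)) > 0"
  using assms unfolding convex_ccw_polygon_def edge_def by auto

lemma convex_ccw_polygon_ge_3: "convex_ccw_polygon n v \<Longrightarrow> 3 \<le> n"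
  unfolding convex_ccw_polygon_def by auto

lemma edge_nonzero:
  assumes "convex_ccw_polygon n v" shows "edge n v i \<noteq> 0"
proof -
  have n: "3 \<le> n" using convex_ccw_polygon_ge_3[OF assms] .
  let ?i = "i mod n"
  have i: "?i < n" using n by simp
  have "Suc ?i mod n \<noteq> ?i"
  proof (cases "Suc ?i < n")
    case True then show ?thesis by simp
  next
    case False then have "Suc ?i = n" using i by simp
    then show ?thesis using n by simp
  qed
  moreover have "Suc ?i mod n < n" using n by simp
  ultimately have "v (Suc ?i mod n) \<noteq> v ?i" using assms i unfolding convex_ccw_polygon_def by blast
  then have "edge n v ?i \<noteq> 0" by (simp add: edge_def vtx_def)
  then show ?thesis by (simp add: edge_mod)
qed

lemma convex_left_turn:
  assumes c: "convex_ccw_polygon n v"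
  shows "Im (cnj (edge n v i) * edge n v (Suc i)) > 0"
proof -
  have n: "3 \<le> n" using convex_ccw_polygon_ge_3[OF c] .
  let ?i = "i mod n"
  have i: "?i < n" using n by simp
  have j1: "(?i + 2) mod n \<noteq> ?i" and j2: "(?i + 2) mod n \<noteq> Suc ?i mod n"
    using add_2_mod_neq[OF i n] by auto
  have A: "Im (cnj (edge n v ?i) * (vtx n v ((?i + 2) mod n) - vtx n v ?i)) > 0"
    by (rule convex_left_of_edge[OF c i _ j1 j2]) (use n in simp)
  have B: "vtx n v ((?i + 2) mod n) - vtx n v ?i = edge n v ?i + edge n v (Suc ?i)"
  proof -
    have "vtx n v ((?i + 2) mod n) - vtx n v ?i = vtx n v (?i + 2) - vtx n v ?i" by (simp only: vtx_mod)
    also have "\<dots> = edge n v ?i + edge n v (Suc ?i)" unfolding vtx_diff_sum_edges by (simp add: numeral_2_eq_2)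
    finally show ?thesis .
  qed
  from A have "Im (cnj (edge n v ?i) * (edge n v ?i + edge n v (Suc ?i))) > 0" unfolding B .
  then have "Im (cnj (edge n v ?i) * edge n v (Suc ?i)) > 0"
    by (simp add: distrib_left)
  moreover have "edge n v (Suc ?i) = edge n v (Suc i)" by (metis edge_mod mod_Suc_eq)
  ultimately show ?thesis by (simp add: edge_mod)
qed

definition edge_cos :: "nat \<Rightarrow> (nat \<Rightarrow> complex) \<Rightarrow> nat \<Rightarrow> real" where
  "edge_cos n v m = Re (cnj (edge n v m) * edge n v (Suc m)) / (cmod (edge n v m) * cmod (edge n v (Suc m)))"

definition edge_turn :: "nat \<Rightarrow> (nat \<Rightarrow> complex) \<Rightarrow> nat \<Rightarrow> complex" where
  "edge_turn n v m = edge n v (Suc m) * cnj (edge n v m) / complex_of_real (cmod (edge n v m) * cmod (edge n v (Suc m)))"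

lemma interior_angle_eq_arccos:
  assumes "1 \<le> n" shows "interior_angle n v i = arccos (- edge_cos n v (i + n - 1))"
proof -
  have s: "Suc (i + n - 1) = i + n" using assms by simp
  have 1: "vtx n v (i + n - 1) - vtx n v i = - edge n v (i + n - 1)"
    unfolding edge_def s vtx_add_n by simp
  have 2: "vtx n v (i + 1) - vtx n v i = edge n v (Suc (i + n - 1))"
    unfolding s edge_add_n by (simp add: edge_def)
  show ?thesis unfolding interior_angle_def ang_def 1 2 edge_cos_def
    by (simp add: minus_divide_left)
qed

lemma edge_cos_mod: "edge_cos n v (m mod n) = edge_cos n v m"
  unfolding edge_cos_def by (metis edge_mod mod_Suc_eq)

lemma abs_edge_cos_le_1: "\<bar>edge_cos n v m\<bar> \<le> 1"
proof -
  let ?a = "edge n v m" and ?b = "edge n v (Suc m)"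
  have "\<bar>Re (cnj ?a * ?b)\<bar> \<le> cmod ?a * cmod ?b"
    using abs_Re_le_cmod[of "cnj ?a * ?b"] by (simp add: norm_mult)
  then show ?thesis unfolding edge_cos_def
    by (cases "cmod ?a * cmod ?b = 0") (simp_all add: abs_divide divide_le_eq_1)
qed

lemma equiangular_edge_cos_const:
  assumes c: "convex_ccw_polygon n v" and e: "equiangular n v"
  shows "edge_cos n v m = edge_cos n v (n - 1)"
proof -
  have n: "3 \<le> n" using convex_ccw_polygon_ge_3[OF c] .
  have key: "edge_cos n v (i + n - 1) = edge_cos n v (n - 1)" if i: "i < n" for i
  proof -
    have n0: "0 < n" using n by simp
    have "interior_angle n v i = interior_angle n v 0" using e[unfolded equiangular_def] i n0 by blast
    then have "arccos (- edge_cos n v (i + n - 1)) = arccos (- edge_cos n v (0 + n - 1))"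
      using n by (simp only: interior_angle_eq_arccos)
    then show ?thesis using abs_edge_cos_le_1 by (simp add: arccos_eq_iff)
  qed
  have "edge_cos n v m = edge_cos n v (m mod n)" by (simp add: edge_cos_mod)
  also have "\<dots> = edge_cos n v (n - 1)"
  proof (cases "m mod n = n - 1")
    case True then show ?thesis by simp
  next
    case False
    define r where "r = m mod n"
    have "r < n" using n by (simp add: r_def)
    then have lt: "r + 1 < n" using False unfolding r_def[symmetric] by linarith
    have "edge_cos n v (r + 1 + n - 1) = edge_cos n v (n - 1)" by (rule key[OF lt])
    moreover have "edge_cos n v (r + 1 + n - 1) = edge_cos n v r"
    proof -
      have "r + 1 + n - 1 = r + n" by simp
      moreover have "edge_cos n v (r + n) = edge_cos n v r" by (metis edge_cos_mod mod_add_self2 r_def mod_mod_trivial)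
      ultimately show ?thesis by simp
    qed
    ultimately show ?thesis by (simp add: r_def)
  qed
  finally show ?thesis .
qed

lemma edge_turn_props:
  assumes c: "convex_ccw_polygon n v"
  shows "Re (edge_turn n v m) = edge_cos n v m" "Im (edge_turn n v m) > 0" "cmod (edge_turn n v m) = 1"
proof -
  let ?a = "edge n v m" and ?b = "edge n v (Suc m)"
  have a: "?a \<noteq> 0" and b: "?b \<noteq> 0" using edge_nonzero[OF c] by auto
  then have p: "cmod ?a * cmod ?b > 0" by simp
  show "Re (edge_turn n v m) = edge_cos n v m" unfolding edge_turn_def edge_cos_def
    by (simp add: Re_divide_of_real mult.commute)
  show "Im (edge_turn n v m) > 0" unfolding edge_turn_def
    using convex_left_turn[OF c, of m] p by (simp add: Im_divide_of_real mult.commute)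
  show "cmod (edge_turn n v m) = 1" unfolding edge_turn_def using a b
    by (simp add: norm_mult norm_divide)
qed

lemma unimodular_eqI:
  assumes "cmod a = 1" "cmod b = 1" "Re a = Re b" "Im a > 0" "Im b > 0"
  shows "a = b"
proof -
  have ha: "(Im a)^2 = 1 - (Re a)^2" using cmod_power2[of a] assms(1) by simp
  have hb: "(Im b)^2 = 1 - (Re b)^2" using cmod_power2[of b] assms(2) by simp
  have "(Im a)^2 = (Im b)^2" using ha hb assms(3) by simp
  then have "Im a = Im b" by (rule power2_eq_imp_eq) (use assms in auto)
  then show ?thesis using assms complex_eqI by blast
qed

lemma equiangular_edge_turn_const:
  assumes c: "convex_ccw_polygon n v" and e: "equiangular n v"
  shows "edge_turn n v m = edge_turn n v 0"
  by (rule unimodular_eqI) (simp_all add: edge_turn_props[OF c] equiangular_edge_cos_const[OF c e, of m] equiangular_edge_cos_const[OF c e, of 0])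

lemma edge_direction_step:
  assumes c: "convex_ccw_polygon n v"
  shows "edge n v (Suc m) / complex_of_real (cmod (edge n v (Suc m))) = edge_turn n v m * (edge n v m / complex_of_real (cmod (edge n v m)))"
proof -
  let ?a = "edge n v m" and ?b = "edge n v (Suc m)"
  have a: "?a \<noteq> 0" and b: "?b \<noteq> 0" using edge_nonzero[OF c] by auto
  have sq: "cnj ?a * ?a = complex_of_real ((cmod ?a)^2)" by (metis complex_norm_square mult.commute)
  have sq2: "?a * cnj ?a = complex_of_real (cmod ?a) * complex_of_real (cmod ?a)"
    by (metis complex_norm_square of_real_mult power2_eq_square)
  show ?thesis unfolding edge_turn_def using a b
    by (simp add: field_simps sq power2_eq_square sq2)
qed

lemma Im_rotations_sign_absurd:
  assumes t: "0 < t" "t < pi" and a: "a \<le> 2*pi" "2*pi < a + t"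
    and D: "Im (cis (- a) * D) > 0" "Im (cis (- (a + t)) * D) \<ge> 0" "Im D < 0"
  shows False
proof -
  have Im_cis: "Im (cis (- b) * D) = Im D * cos b - Re D * sin b" for b
    by (simp add: cis.code)
  have "sin a \<le> 0"
    using a t by (cases "a = 2*pi") (auto intro: sin_le_zero)
  moreover have "sin (a + t) > 0"
    using sin_gt_zero[of "a + t - 2*pi"] a t by (simp add: sin_diff)
  ultimately have "sin (a + t) * Im (cis (- a) * D) + (- sin a) * Im (cis (- (a + t)) * D) > 0"
    using D by (intro add_pos_nonneg mult_pos_pos mult_nonneg_nonneg) auto
  also have "\<dots> = Im D * sin ((a + t) - a)"
    unfolding Im_cis by (simp only: sin_diff) (simp add: algebra_simps)
  finally show False using D(3) sin_gt_zero[OF t] by (simp add: zero_less_mult_iff)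
qed

lemma Im_cnj_rotating_edge:
  assumes Ef: "\<And>m. edge n v m = complex_of_real (cmod (edge n v m)) * (u * cis (t * real m))"
  shows "Im (cnj (edge n v m) * z) = cmod (edge n v m) * Im (cis (- (t * real m)) * (cnj u * z))"
proof -
  have "cnj (edge n v m) * z = complex_of_real (cmod (edge n v m)) * (cis (- (t * real m)) * (cnj u * z))"
    by (subst Ef) (simp add: cis_cnj mult_ac)
  moreover have "Im (complex_of_real r * w) = r * Im w" for r w by simp
  ultimately show ?thesis by (simp only:)
qed

lemma convex_rotating_edges_signs:
  assumes c: "convex_ccw_polygon n v" and l: "2 \<le> l" "l + 2 \<le> n"
    and Ef: "\<And>m. edge n v m = complex_of_real (cmod (edge n v m)) * (u * cis (t * real m))"
  defines "D \<equiv> cnj u * (vtx n v 0 - vtx n v (l + 1))"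
  shows "Im (cis (- (t * real l)) * D) > 0" "Im (cis (- (t * real (l + 1))) * D) \<ge> 0" "Im D < 0"
proof -
  note Im_edge = Im_cnj_rotating_edge[OF Ef]
  have pos: "cmod (edge n v m) > 0" for m using edge_nonzero[OF c] by simp
  have "Im (cnj (edge n v l) * (vtx n v 0 - vtx n v l)) > 0"
    by (rule convex_left_of_edge[OF c]) (use l in auto)
  moreover have "vtx n v 0 - vtx n v l = (vtx n v 0 - vtx n v (l + 1)) + edge n v l"
    by (simp add: edge_def)
  ultimately have "Im (cnj (edge n v l) * (vtx n v 0 - vtx n v (l + 1))) > 0"
    by (simp add: distrib_left)
  then show "Im (cis (- (t * real l)) * D) > 0"
    using pos[of l] unfolding Im_edge D_def by (simp add: zero_less_mult_iff)
  have "Im (cnj (edge n v (l + 1)) * (vtx n v 0 - vtx n v (l + 1))) \<ge> 0"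
  proof (cases "l + 2 = n")
    case True
    then have "vtx n v 0 - vtx n v (l + 1) = edge n v (l + 1)"
      using vtx_add_n[of n v 0] by (simp add: edge_def)
    then show ?thesis by simp
  next
    case False
    have "Im (cnj (edge n v (l + 1)) * (vtx n v 0 - vtx n v (l + 1))) > 0"
      by (rule convex_left_of_edge[OF c]) (use l False in \<open>auto simp: mod_if\<close>)
    then show ?thesis by simp
  qed
  then show "Im (cis (- (t * real (l + 1))) * D) \<ge> 0"
    using pos[of "l + 1"] unfolding Im_edge D_def by (simp add: zero_le_mult_iff)
  have "Im (cnj (edge n v 0) * (vtx n v (l + 1) - vtx n v 0)) > 0"
    by (rule convex_left_of_edge[OF c]) (use l in auto)
  then have "Im (cnj u * (vtx n v (l + 1) - vtx n v 0)) > 0"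
    using pos[of 0] unfolding Im_edge by (simp add: zero_less_mult_iff)
  moreover have "cnj u * (vtx n v (l + 1) - vtx n v 0) = - D" by (simp add: D_def algebra_simps)
  ultimately have "Im (- D) > 0" by (simp only:)
  then show "Im D < 0" by simp
qed

text \<open>If the edge directions turn by \<open>t = 2\<pi>q/n\<close> with \<open>q \<ge> 2\<close>, then after \<open>l = n div q\<close> edges the
  total turn \<open>t l\<close> lies in \<open>(\<pi>, 2\<pi>]\<close> while \<open>t (l + 1) > 2\<pi>\<close>; the signs required by convexity in
  \<open>convex_rotating_edges_signs\<close> then contradict \<open>Im_rotations_sign_absurd\<close>.\<close>

lemma convex_edge_rotation_eq_1:
  assumes c: "convex_ccw_polygon n v" and q: "0 < q" "2 * q < n"
    and Ef: "\<And>m. edge n v m = complex_of_real (cmod (edge n v m)) * (u * cis (2*pi*real q/real n * real m))"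
  shows "q = 1"
proof (rule ccontr)
  assume "q \<noteq> 1"
  with q have q2: "2 \<le> q" by simp
  define t where "t = 2*pi*real q/real n"
  define l where "l = n div q"
  have "2 * q div q \<le> l" unfolding l_def by (rule div_le_mono) (use q in simp)
  then have l2: "2 \<le> l" using q by simp
  have "l \<le> n div 2" unfolding l_def by (rule div_le_mono2) (use q2 in auto)
  then have ln: "l + 2 \<le> n" using q by linarith
  have "n = q * l + n mod q" "n mod q < q" using q by (simp_all add: l_def)
  then have "q * l \<le> n" "n < q * l + q" by linarith+
  then have "real q * real l \<le> real n" "2*pi*real n < 2*pi*(real q * real l + real q)"
    by (metis of_nat_le_iff of_nat_mult, simp flip: of_nat_mult of_nat_add)
  then have "t * real l \<le> 2*pi" "2*pi < t * real l + t"
    using q by (simp_all add: t_def field_simps)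
  moreover have "0 < t" "t < pi" using q by (simp_all add: t_def field_simps)
  moreover note signs = convex_rotating_edges_signs[OF c l2 ln Ef[folded t_def]]
  moreover have "t * real (l + 1) = t * real l + t" by (simp add: distrib_left)
  ultimately show False
    using Im_rotations_sign_absurd[of t "t * real l"] by (simp only:) blast
qed

lemma equiangular_edge_directions:
  assumes c: "convex_ccw_polygon n v" and e: "equiangular n v"
  obtains u z where "cmod u = 1" "cmod z = 1" "Im z > 0" "z ^ n = 1"
    "\<And>m. edge n v m = complex_of_real (cmod (edge n v m)) * (z ^ m * u)"
proof -
  define z where "z = edge_turn n v 0"
  define U where "U m = edge n v m / complex_of_real (cmod (edge n v m))" for m
  have Enz: "edge n v m \<noteq> 0" for m using edge_nonzero[OF c] .
  have Upow: "U m = z ^ m * U 0" for m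
  proof (induction m)
    case (Suc m)
    have "U (Suc m) = edge_turn n v m * U m" unfolding U_def by (rule edge_direction_step[OF c])
    also have "\<dots> = z * U m" unfolding z_def by (subst equiangular_edge_turn_const[OF c e, of m]) (rule refl)
    finally show ?case using Suc.IH by simp
  qed simp
  have cu: "cmod (U 0) = 1" using Enz[of 0] by (simp add: U_def norm_divide)
  have "U n = U 0" unfolding U_def using edge_add_n[of n v 0] by simp
  then have "z ^ n * U 0 = U 0" using Upow[of n] by simp
  then have zn: "z ^ n = 1" using cu by auto
  have EU: "edge n v m = complex_of_real (cmod (edge n v m)) * U m" for m
    using Enz[of m] by (simp add: U_def)
  have "edge n v m = complex_of_real (cmod (edge n v m)) * (z ^ m * U 0)" for m
    using EU[of m] unfolding Upow[of m] .
  moreover have "cmod z = 1" "Im z > 0" using edge_turn_props[OF c] by (simp_all add: z_def)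
  ultimately show ?thesis using that cu zn by blast
qed

lemma root_of_unity_upper_half:
  assumes "z ^ n = 1" "cmod z = 1" "Im z > 0" and n: "0 < n"
  obtains q where "0 < q" "2 * q < n" "z = cis (2*pi*real q/real n)"
proof -
  obtain t where t: "0 \<le> t" "t < 2*pi" "z = Complex (cos t) (sin t)"
    using complex_unimodular_polar[OF assms(2)] by blast
  have z: "z = cis t" using t by (simp add: complex_eq_iff)
  have "sin t > 0" using assms t by simp
  then have tpos: "0 < t" and tpi: "t < pi"
    using t sin_le_zero[of t] by (cases "t = 0"; force)+
  have "cos (real n * t) = 1" using assms(1) by (simp add: z DeMoivre complex_eq_iff)
  then obtain q :: int where q: "real n * t = of_int q * 2 * pi" by (auto simp: cos_one_2pi_int)
  have "0 < of_int q * 2 * pi" "of_int q * 2 * pi < real n * pi"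
    using q tpos tpi n by (simp_all flip: q)
  then have "0 < q" "2 * q < int n"
    by (simp_all add: zero_less_mult_iff)
  moreover have "t = 2*pi*real (nat q)/real n" using q n \<open>0 < q\<close> by (simp add: field_simps)
  ultimately show ?thesis using z by (intro that[of "nat q"]) auto
qed

lemma equiangular_edges:
  assumes c: "convex_ccw_polygon n v" and e: "equiangular n v" and n5: "5 \<le> n"
  obtains u where "cmod u = 1"
    "\<And>m. edge n v m = complex_of_real (cmod (edge n v m)) * (u * cis (2*pi*real m/real n))"
proof -
  obtain u z where u: "cmod u = 1" and z: "cmod z = 1" "Im z > 0" "z ^ n = 1"
    and Ez: "\<And>m. edge n v m = complex_of_real (cmod (edge n v m)) * (z ^ m * u)"
    using equiangular_edge_directions[OF c e] by blast
  obtain q where q: "0 < q" "2 * q < n" and zq: "z = cis (2*pi*real q/real n)"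
    by (rule root_of_unity_upper_half[OF z(3,1,2)]) (use n5 in auto)
  have Eq: "edge n v m = complex_of_real (cmod (edge n v m)) * (u * cis (2*pi*real q/real n * real m))" for m
    using Ez[of m] by (simp add: zq DeMoivre mult_ac)
  have "q = 1" by (rule convex_edge_rotation_eq_1[OF c q Eq])
  with Eq have "edge n v m = complex_of_real (cmod (edge n v m)) * (u * cis (2*pi*real m/real n))" for m
    by (simp add: mult.commute)
  then show ?thesis by (rule that[OF u])
qed

section \<open>The Gutkin condition as a linear system\<close>

definition chord_sum :: "nat \<Rightarrow> nat \<Rightarrow> (nat \<Rightarrow> real) \<Rightarrow> nat \<Rightarrow> complex" where
  "chord_sum n k S i = (\<Sum>t<k. complex_of_real (S (i+t)) * cis (2*pi*real t/real n))"

lemma chord_eq_chord_sum: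
  assumes Ef: "\<And>m. edge n v m = complex_of_real (S m) * (u * cis (2*pi*real m/real n))"
  shows "vtx n v (i + k) - vtx n v i = u * cis (2*pi*real i/real n) * chord_sum n k S i"
proof -
  have "vtx n v (i + k) - vtx n v i = (\<Sum>t<k. edge n v (i + t))" by (rule vtx_diff_sum_edges)
  also have "\<dots> = (\<Sum>t<k. u * cis (2*pi*real i/real n) * (complex_of_real (S (i+t)) * cis (2*pi*real t/real n)))"
  proof (intro sum.cong refl)
    fix t
    have "cis (2*pi*real i/real n) * cis (2*pi*real t/real n) = cis (2*pi*real (i+t)/real n)"
      unfolding cis_mult by (rule arg_cong[where f=cis]) (simp add: add_divide_distrib[symmetric] algebra_simps)
    then show "edge n v (i + t) = u * cis (2*pi*real i/real n) * (complex_of_real (S (i+t)) * cis (2*pi*real t/real n))"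
      unfolding Ef by (simp add: mult_ac)
  qed
  also have "\<dots> = u * cis (2*pi*real i/real n) * chord_sum n k S i"
    unfolding chord_sum_def by (simp add: sum_distrib_left)
  finally show ?thesis .
qed

lemma arccos_Re_scale:
  assumes "p > 0"
  shows "arccos (Re (complex_of_real p * z) / (p * cmod z)) = arccos (Re z / cmod z)"
  using assms by simp

lemma chord_angle_start:
  assumes Ef: "\<And>m. edge n v m = complex_of_real (S m) * (u * cis (2*pi*real m/real n))"
    and cu: "cmod u = 1" and Sp: "\<And>m. S m > 0"
  shows "ang (vtx n v (i+1)) (vtx n v i) (vtx n v (i+k)) = arccos (Re (chord_sum n k S i) / cmod (chord_sum n k S i))"
proof -
  have cu': "cnj u * u = 1" using cu by (metis complex_norm_square mult.commute norm_one of_real_1 one_power2)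
  have C: "vtx n v (i + k) - vtx n v i = u * cis (2*pi*real i/real n) * chord_sum n k S i"
    by (rule chord_eq_chord_sum[OF Ef])
  have "cnj (edge n v i) * (vtx n v (i + k) - vtx n v i) =
      complex_of_real (S i) * ((cnj u * u) * (cnj (cis (2*pi*real i/real n)) * cis (2*pi*real i/real n))) * chord_sum n k S i"
    unfolding C Ef by (simp add: mult_ac)
  then have "cnj (edge n v i) * (vtx n v (i + k) - vtx n v i) = complex_of_real (S i) * chord_sum n k S i"
    by (simp only: cu' cnj_cis_cis diff_self cis_zero mult_1_right mult_1_left)
  moreover have "vtx n v (i+1) - vtx n v i = edge n v i" by (simp add: edge_def)
  moreover have "cmod (edge n v i) = S i" using Sp[of i] cu by (simp add: Ef norm_mult)
  moreover have "cmod (vtx n v (i + k) - vtx n v i) = cmod (chord_sum n k S i)" using cu by (simp add: C norm_mult)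
  ultimately show ?thesis unfolding ang_def using Sp[of i] by (simp only: arccos_Re_scale)
qed

lemma chord_angle_end:
  assumes Ef: "\<And>m. edge n v m = complex_of_real (S m) * (u * cis (2*pi*real m/real n))"
    and cu: "cmod u = 1" and Sp: "\<And>m. S m > 0" and k: "1 \<le> k"
  shows "ang (vtx n v (i+k-1)) (vtx n v (i+k)) (vtx n v i) =
       arccos (Re (cis (- (2*pi*(real k - 1)/real n)) * chord_sum n k S i) / cmod (chord_sum n k S i))"
proof -
  have cu': "cnj u * u = 1" using cu by (metis complex_norm_square mult.commute norm_one of_real_1 one_power2)
  have C: "vtx n v (i + k) - vtx n v i = u * cis (2*pi*real i/real n) * chord_sum n k S i"
    by (rule chord_eq_chord_sum[OF Ef])
  have "vtx n v (i+k-1) - vtx n v (i+k) = - edge n v (i+k-1)"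
    using k by (simp add: edge_def)
  moreover have "cnj (- edge n v (i+k-1)) * (vtx n v i - vtx n v (i + k)) =
     complex_of_real (S (i+k-1)) * (cis (- (2*pi*(real k - 1)/real n)) * chord_sum n k S i)"
  proof -
    have "cnj (- edge n v (i+k-1)) * (vtx n v i - vtx n v (i + k)) = cnj (edge n v (i+k-1)) * (vtx n v (i + k) - vtx n v i)"
      by (simp add: algebra_simps)
    also have "\<dots> = complex_of_real (S (i+k-1)) * ((cnj u * u) * (cnj (cis (2*pi*real (i+k-1)/real n)) * cis (2*pi*real i/real n))) * chord_sum n k S i"
      unfolding C Ef by (simp add: mult_ac)
    also have "cnj (cis (2*pi*real (i+k-1)/real n)) * cis (2*pi*real i/real n) = cis (- (2*pi*(real k - 1)/real n))"
      unfolding cis_cnj cis_mult using k by (intro arg_cong[where f=cis]) (cases "n = 0", simp_all add: of_nat_diff field_simps)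
    finally show ?thesis using cu' by (simp add: mult_ac)
  qed
  moreover have "cmod (- edge n v (i+k-1)) = S (i+k-1)" using Sp[of "i+k-1"] cu by (simp add: Ef norm_mult)
  moreover have "cmod (vtx n v i - vtx n v (i + k)) = cmod (chord_sum n k S i)"
    using cu by (subst norm_minus_commute) (simp add: C norm_mult)
  ultimately show ?thesis unfolding ang_def using Sp[of "i+k-1"] by simp
qed

lemma chord_sum_rotated_parts:
  "Im (cis (- ((real k - 1)*pi/real n)) * chord_sum n k S i) = (\<Sum>t<k. gutkin_weight n k t * S (i+t))"
  "Re (cis (- ((real k - 1)*pi/real n)) * chord_sum n k S i) = (\<Sum>t<k. S (i+t) * cos (gutkin_node n k t))"
proof -
  have e: "cis (- ((real k - 1)*pi/real n)) * (complex_of_real (S (i+t)) * cis (2*pi*real t/real n))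
     = complex_of_real (S (i+t)) * cis ((2*real t + 1 - real k)*pi/real n)" for t
  proof -
    have "cis (- ((real k - 1)*pi/real n)) * cis (2*pi*real t/real n) = cis ((2*real t + 1 - real k)*pi/real n)"
      unfolding cis_mult by (intro arg_cong[where f=cis]) (simp add: diff_divide_distrib[symmetric] add_divide_distrib[symmetric] algebra_simps)
    then show ?thesis by (metis mult.left_commute)
  qed
  show "Im (cis (- ((real k - 1)*pi/real n)) * chord_sum n k S i) = (\<Sum>t<k. gutkin_weight n k t * S (i+t))"
    unfolding chord_sum_def sum_distrib_left e Im_sum by (simp add: gutkin_weight_def gutkin_node_def mult.commute)
  show "Re (cis (- ((real k - 1)*pi/real n)) * chord_sum n k S i) = (\<Sum>t<k. S (i+t) * cos (gutkin_node n k t))"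
    unfolding chord_sum_def sum_distrib_left e Re_sum by (simp add: gutkin_node_def)
qed

lemma Im_rotated_eq_0_if_Re_eq:
  fixes Z :: complex
  assumes k: "2 \<le> k" "2*k < n"
    and eq: "Re Z = Re (cis (- (2*pi*(real k - 1)/real n)) * Z)"
  shows "Im (cis (- ((real k - 1)*pi/real n)) * Z) = 0"
proof -
  define b where "b = (real k - 1)*pi/real n"
  have w: "cis (- (2*pi*(real k - 1)/real n)) = cis (-b) * cis (-b)"
    unfolding b_def cis_mult by (intro arg_cong[where f=cis]) (cases "n = 0", simp_all add: field_simps)
  define Y where "Y = cis (-b) * Z"
  have Z: "Z = cis b * Y" unfolding Y_def by (simp add: cis_mult)
  have sb: "sin b > 0" unfolding b_def
  proof (rule sin_gt_zero)
    show "0 < (real k - 1) * pi / real n" using k by (simp add: field_simps)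
    have "real k - 1 < real n" using k by linarith
    then have "(real k - 1) * pi < pi * real n" by simp
    then show "(real k - 1) * pi / real n < pi" using k by (simp add: divide_less_eq)
  qed
  have "Re (cis b * Y) = Re (cis (-b) * Y)"
    using eq unfolding w Z by (simp add: cis_mult mult.assoc[symmetric])
  then have "sin b * Im Y = 0" by (simp add: cis.code algebra_simps)
  then have "Im Y = 0" using sb by simp
  then show ?thesis unfolding Y_def b_def .
qed

lemma abs_Re_div_cmod_le_1: "\<bar>Re z / cmod z\<bar> \<le> 1"
  using abs_Re_le_cmod[of z] by (cases "z = 0") (simp_all add: abs_divide divide_le_eq_1)

lemma gutkin_form_side_lengths:
  assumes g: "gutkin n k v" and e: "equiangular n v" and k: "2 \<le> k" "2*k < n" and i: "i < n"
  shows "gutkin_form n k (side_lengths n v) i = 0"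
proof -
  have c: "convex_ccw_polygon n v" using g unfolding gutkin_def by simp
  have n5: "5 \<le> n" using k by simp
  obtain u where cu: "cmod u = 1" and Ef0: "\<And>m. edge n v m = complex_of_real (cmod (edge n v m)) * (u * cis (2*pi*real m/real n))"
    using equiangular_edges[OF c e n5] by blast
  define S where "S m = cmod (edge n v m)" for m
  have Ef: "edge n v m = complex_of_real (S m) * (u * cis (2*pi*real m/real n))" for m
    unfolding S_def by (rule Ef0)
  have Sp: "S m > 0" for m using edge_nonzero[OF c] by (simp add: S_def)
  obtain \<alpha> where al: "\<forall>i<n. ang (vtx n v (i + 1)) (vtx n v i) (vtx n v (i + k)) = \<alpha> \<and>
        ang (vtx n v (i + k - 1)) (vtx n v (i + k)) (vtx n v i) = \<alpha>"
    using g unfolding gutkin_def by blast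
  have "arccos (Re (chord_sum n k S i) / cmod (chord_sum n k S i)) =
      arccos (Re (cis (- (2*pi*(real k - 1)/real n)) * chord_sum n k S i) / cmod (chord_sum n k S i))"
    using al i chord_angle_start[OF Ef cu Sp, of i k] chord_angle_end[OF Ef cu Sp, of k i] k by simp
  moreover have "cmod (cis (- (2*pi*(real k - 1)/real n)) * chord_sum n k S i) = cmod (chord_sum n k S i)"
    by (simp add: norm_mult)
  ultimately have "Re (chord_sum n k S i) / cmod (chord_sum n k S i) = Re (cis (- (2*pi*(real k - 1)/real n)) * chord_sum n k S i) / cmod (chord_sum n k S i)"
    using abs_Re_div_cmod_le_1[of "chord_sum n k S i"] abs_Re_div_cmod_le_1[of "cis (- (2*pi*(real k - 1)/real n)) * chord_sum n k S i"]
    by (simp add: arccos_eq_iff)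
  then have "Re (chord_sum n k S i) = Re (cis (- (2*pi*(real k - 1)/real n)) * chord_sum n k S i)"
    by (cases "chord_sum n k S i = 0") (simp_all add: norm_mult)
  then have "Im (cis (- ((real k - 1)*pi/real n)) * chord_sum n k S i) = 0" by (rule Im_rotated_eq_0_if_Re_eq[OF k])
  then have "(\<Sum>t<k. gutkin_weight n k t * S (i+t)) = 0" unfolding chord_sum_rotated_parts .
  moreover have "side_lengths n v ((i + t) mod n) = S (i + t)" for t
  proof -
    have "(i+t) mod n < n" using n5 by simp
    then have "side_lengths n v ((i + t) mod n) = cmod (edge n v ((i+t) mod n))"
      by (simp add: side_lengths_def edge_def)
    then show ?thesis by (simp add: edge_mod S_def)
  qed
  ultimately show ?thesis unfolding gutkin_form_def by simp
qed

section \<open>Polygons with prescribed sides\<close>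

definition polygon_of_sides :: "nat \<Rightarrow> (nat \<Rightarrow> real) \<Rightarrow> nat \<Rightarrow> complex" where
  "polygon_of_sides n x i = (\<Sum>j<i. complex_of_real (x j) * cis (2*pi*real j/real n))"

lemma edge_polygon_of_sides:
  assumes n: "n > 0" and cl: "(\<Sum>j<n. complex_of_real (x j) * cis (2*pi*real j/real n)) = 0"
  shows "edge n (polygon_of_sides n x) m = complex_of_real (x (m mod n)) * cis (2*pi*real m/real n)"
proof -
  let ?v = "polygon_of_sides n x"
  define m' where "m' = m mod n"
  have m': "m' < n" using n by (simp add: m'_def)
  have "edge n ?v m' = complex_of_real (x m') * cis (2*pi*real m'/real n)"
  proof (cases "Suc m' < n")
    case True
    then show ?thesis using m' by (simp add: edge_def vtx_def polygon_of_sides_def)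
  next
    case False
    then have s: "Suc m' = n" using m' by simp
    have "vtx n ?v (Suc m') = 0" unfolding s by (simp add: vtx_def polygon_of_sides_def)
    moreover have "vtx n ?v m' = - (complex_of_real (x m') * cis (2*pi*real m'/real n))"
    proof -
      have "(\<Sum>j<Suc m'. complex_of_real (x j) * cis (2*pi*real j/real n)) = 0" using cl s by simp
      then show ?thesis using m' by (simp add: vtx_def polygon_of_sides_def eq_neg_iff_add_eq_0)
    qed
    ultimately show ?thesis by (simp add: edge_def)
  qed
  then show ?thesis unfolding m'_def edge_mod cis_mod_nat[OF n] .
qed

text \<open>Either the prefix stays in the upper half-turn, where all terms are non-negative and the
  term \<open>t = 1\<close> is positive, or its complement lies in the lower half-turn, where all terms are
  negative, and the total vanishes.\<close>

lemma sum_sin_prefix_pos: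
  fixes y :: "nat \<Rightarrow> real"
  assumes n: "3 \<le> n" and y: "\<And>t. 0 < y t"
    and total: "(\<Sum>t<n. y t * sin (2*pi*real t/real n)) = 0" and d: "2 \<le> d" "d < n"
  shows "(\<Sum>t<d. y t * sin (2*pi*real t/real n)) > 0"
proof (cases "2 * (d - 1) \<le> n")
  case True
  have "sin (2*pi*real t/real n) \<ge> 0" if "t < d" for t
    using True that n by (intro sin_ge_zero) (auto simp: field_simps)
  moreover have "sin (2*pi*real 1/real n) > 0"
    using sin_pi_fraction_pos[of 2 n] n by (simp add: mult.commute)
  ultimately show ?thesis
    using y d by (intro sum_pos2[of _ 1]) (auto intro: mult_nonneg_nonneg less_imp_le)
next
  case False
  have "sin (2*pi*real t/real n) < 0" if "d \<le> t" "t < n" for t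
    using False that n by (intro sin_lt_zero) (auto simp: field_simps)
  then have "(\<Sum>t\<in>{d..<n}. - (y t * sin (2*pi*real t/real n))) > 0"
    using y d by (intro sum_pos2[of _ d]) (auto intro!: mult_pos_neg less_imp_le simp: mult_less_0_iff)
  moreover have "(\<Sum>t<n. y t * sin (2*pi*real t/real n)) =
      (\<Sum>t<d. y t * sin (2*pi*real t/real n)) + (\<Sum>t\<in>{d..<n}. y t * sin (2*pi*real t/real n))"
    using d by (simp add: atLeast0LessThan[symmetric] sum.atLeastLessThan_concat)
  ultimately show ?thesis using total by (simp add: sum_negf)
qed

lemma polygon_of_sides_left:
  assumes n3: "3 \<le> n" and xp: "\<And>i. i < n \<Longrightarrow> x i > 0"
    and cl: "(\<Sum>j<n. complex_of_real (x j) * cis (2*pi*real j/real n)) = 0"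
    and i: "i < n" and j: "j < n" "j \<noteq> i" "j \<noteq> Suc i mod n"
  shows "Im (cnj (edge n (polygon_of_sides n x) i) * (vtx n (polygon_of_sides n x) j - vtx n (polygon_of_sides n x) i)) > 0"
proof -
  let ?v = "polygon_of_sides n x"
  have n: "n > 0" using n3 by simp
  define y where "y t = x ((i + t) mod n)" for t
  have yp: "y t > 0" for t unfolding y_def using xp n by simp
  have Eit: "cnj (edge n ?v i) * edge n ?v (i + t) = complex_of_real (x i * y t) * cis (2*pi*real t/real n)" for t
  proof -
    have "cnj (edge n ?v i) * edge n ?v (i + t) = complex_of_real (x i * y t) * (cnj (cis (2*pi*real i/real n)) * cis (2*pi*real (i+t)/real n))"
      unfolding edge_polygon_of_sides[OF n cl] y_def using i by (simp add: mult_ac)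
    also have "cnj (cis (2*pi*real i/real n)) * cis (2*pi*real (i+t)/real n) = cis (2*pi*real t/real n)"
      unfolding cnj_cis_cis by (intro arg_cong[where f=cis]) (simp add: diff_divide_distrib[symmetric] algebra_simps)
    finally show ?thesis .
  qed
  have key: "Im (cnj (edge n ?v i) * (vtx n ?v (i + d) - vtx n ?v i)) = x i * (\<Sum>t<d. y t * sin (2*pi*real t/real n))" for d
    unfolding vtx_diff_sum_edges sum_distrib_left Im_sum Eit by (simp add: algebra_simps)
  have "x i * (\<Sum>t<n. y t * sin (2*pi*real t/real n)) = 0"
    unfolding key[symmetric] by (simp add: vtx_add_n)
  then have total: "(\<Sum>t<n. y t * sin (2*pi*real t/real n)) = 0" using xp[OF i] by simp
  define d where "d = (j + n - i) mod n"
  have "(i + d) mod n = (j + n) mod n" using i by (simp add: d_def mod_add_right_eq)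
  then have dj: "(i + d) mod n = j" using j by simp
  have "d < n" using n by (simp add: d_def)
  moreover have "2 \<le> d"
  proof (rule ccontr)
    assume "\<not> 2 \<le> d"
    then have "d = 0 \<or> d = 1" by linarith
    then show False using dj j i by auto
  qed
  moreover have "vtx n ?v j = vtx n ?v (i + d)" using dj vtx_mod[of n ?v "i+d"] j by (simp add: vtx_def)
  ultimately show ?thesis using key sum_sin_prefix_pos[OF n3 yp total] xp[OF i] by simp
qed

lemma convex_polygon_of_sides:
  assumes n3: "3 \<le> n" and xp: "\<And>i. i < n \<Longrightarrow> x i > 0"
    and cl: "(\<Sum>j<n. complex_of_real (x j) * cis (2*pi*real j/real n)) = 0"
  shows "convex_ccw_polygon n (polygon_of_sides n x)"
  unfolding convex_ccw_polygon_def
proof (intro conjI allI impI)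
  let ?v = "polygon_of_sides n x"
  show "3 \<le> n" by (rule n3)
  fix i j assume i: "i < n" and j: "j < n"
  show "?v i \<noteq> ?v j" if "i \<noteq> j"
  proof (cases "j = Suc i mod n")
    case True
    have "?v j - ?v i = edge n ?v i" using i j True by (simp add: edge_def vtx_def)
    moreover have "edge n ?v i \<noteq> 0"
      using edge_polygon_of_sides[OF _ cl, of i] xp[OF i] i by simp
    ultimately show ?thesis by auto
  next
    case False
    have "Im (cnj (edge n ?v i) * (vtx n ?v j - vtx n ?v i)) > 0"
      by (rule polygon_of_sides_left[OF n3 xp cl i j]) (use that False in auto)
    then show ?thesis using i j by (auto simp: vtx_def)
  qed
  show "Im (cnj (vtx n ?v (i + 1) - vtx n ?v i) * (vtx n ?v j - vtx n ?v i)) > 0"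
    if "j \<noteq> i" "j \<noteq> (i + 1) mod n"
    using polygon_of_sides_left[OF n3 xp cl i j] that by (simp add: edge_def)
qed

lemma equiangular_polygon_of_sides:
  assumes n: "0 < n" and xp: "\<And>i. i < n \<Longrightarrow> x i > 0"
    and cl: "(\<Sum>j<n. complex_of_real (x j) * cis (2*pi*real j/real n)) = 0"
  shows "equiangular n (polygon_of_sides n x)"
proof -
  let ?v = "polygon_of_sides n x"
  have xm: "x (m mod n) > 0" for m using xp n by simp
  have "edge_cos n ?v m = cos (2*pi/real n)" for m
  proof -
    have "cnj (edge n ?v m) * edge n ?v (Suc m) =
        complex_of_real (x (m mod n) * x (Suc m mod n)) * (cnj (cis (2*pi*real m/real n)) * cis (2*pi*real (Suc m)/real n))"
      unfolding edge_polygon_of_sides[OF n cl] by (simp add: mult_ac)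
    also have "cnj (cis (2*pi*real m/real n)) * cis (2*pi*real (Suc m)/real n) = cis (2*pi/real n)"
      unfolding cnj_cis_cis by (intro arg_cong[where f=cis]) (simp add: diff_divide_distrib[symmetric] algebra_simps)
    finally have "cnj (edge n ?v m) * edge n ?v (Suc m) = complex_of_real (x (m mod n) * x (Suc m mod n)) * cis (2*pi/real n)" .
    moreover have "cmod (edge n ?v j) = x (j mod n)" for j
      using xm[of j] by (simp add: edge_polygon_of_sides[OF n cl] norm_mult)
    ultimately show ?thesis using xm[of m] xm[of "Suc m"] unfolding edge_cos_def by simp
  qed
  then show ?thesis unfolding equiangular_def using n by (simp add: interior_angle_eq_arccos)
qed

lemma cos_gutkin_node_pos:
  assumes "t < k" "2 * k < n"
  shows "cos (gutkin_node n k t) > 0"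
proof -
  have "real (t + 1) \<le> real k" "real (2 * k) < real n" using assms by simp_all
  then have "\<bar>2*real t + 1 - real k\<bar> * 2 < real n" by (auto simp: abs_if)
  then have "\<bar>2*real t + 1 - real k\<bar> * pi / real n < pi / 2"
    using assms by (simp add: divide_less_eq)
  then have "\<bar>gutkin_node n k t\<bar> < pi / 2"
    unfolding gutkin_node_def abs_divide abs_mult by simp
  then show ?thesis by (intro cos_gt_zero_pi) (auto simp: abs_less_iff)
qed

lemma chord_sum_if_gutkin_form_eq_0:
  assumes k: "1 \<le> k" "2 * k < n" and Sp: "\<And>m. S m > 0"
    and g: "(\<Sum>t<k. gutkin_weight n k t * S (i + t)) = 0"
  obtains r where "r > 0" "chord_sum n k S i = cis ((real k - 1)*pi/real n) * complex_of_real r"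
proof -
  define b where "b = (real k - 1)*pi/real n"
  define Y where "Y = cis (- b) * chord_sum n k S i"
  have "Im Y = 0" using g unfolding Y_def b_def chord_sum_rotated_parts .
  then have "Y = complex_of_real (Re Y)" by (simp add: complex_eq_iff)
  then have "chord_sum n k S i = cis b * complex_of_real (Re Y)"
    unfolding Y_def by (metis cis_mult add.right_inverse cis_zero mult.assoc mult_1)
  moreover have "Re Y = (\<Sum>t<k. S (i + t) * cos (gutkin_node n k t))"
    unfolding Y_def b_def by (rule chord_sum_rotated_parts(2))
  moreover have "\<dots> > 0"
    using k Sp cos_gutkin_node_pos[of _ k n]
    by (intro sum_pos2[of _ 0]) (auto intro: mult_nonneg_nonneg less_imp_le)
  ultimately show ?thesis using that unfolding b_def by auto
qed

lemma gutkin_polygon_of_sides: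
  assumes k: "2 \<le> k" "2*k < n" and xp: "\<And>i. i < n \<Longrightarrow> x i > 0"
    and cl: "(\<Sum>j<n. complex_of_real (x j) * cis (2*pi*real j/real n)) = 0"
    and g: "\<And>i. i < n \<Longrightarrow> gutkin_form n k x i = 0"
  shows "gutkin n k (polygon_of_sides n x)"
  unfolding gutkin_def
proof (intro conjI exI allI impI)
  let ?v = "polygon_of_sides n x" and ?b = "(real k - 1)*pi/real n"
  have n: "0 < n" using k by simp
  show "convex_ccw_polygon n ?v" using k by (intro convex_polygon_of_sides xp cl) auto
  define S where "S m = x (m mod n)" for m
  have Sp: "S m > 0" for m unfolding S_def using xp n by simp
  have Ef: "edge n ?v m = complex_of_real (S m) * (1 * cis (2*pi*real m/real n))" for m
    unfolding S_def edge_polygon_of_sides[OF n cl] by simp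
  fix i assume i: "i < n"
  have "(\<Sum>t<k. gutkin_weight n k t * S (i + t)) = gutkin_form n k x i"
    unfolding gutkin_form_def S_def ..
  then obtain r where r: "r > 0" and Z: "chord_sum n k S i = cis ?b * complex_of_real r"
    using chord_sum_if_gutkin_form_eq_0[of k n S i] k Sp g[OF i] by auto
  have w: "cis (- (2*pi*(real k - 1)/real n)) * cis ?b = cis (- ?b)"
    unfolding cis_mult by (intro arg_cong[where f=cis]) (simp add: field_simps)
  show "ang (vtx n ?v (i + 1)) (vtx n ?v i) (vtx n ?v (i + k)) = arccos (cos ?b)"
    using chord_angle_start[OF Ef _ Sp, of i k] k r by (simp add: Z norm_mult)
  show "ang (vtx n ?v (i + k - 1)) (vtx n ?v (i + k)) (vtx n ?v i) = arccos (cos ?b)"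
    using chord_angle_end[OF Ef _ Sp, of k i] k r
    by (simp add: Z norm_mult w mult.assoc[symmetric])
qed

lemma side_lengths_polygon_of_sides:
  assumes n: "0 < n" and xz: "\<And>i. n \<le> i \<Longrightarrow> x i = 0"
    and cl: "(\<Sum>j<n. complex_of_real (x j) * cis (2*pi*real j/real n)) = 0"
    and xp: "\<And>i. i < n \<Longrightarrow> x i > 0"
  shows "side_lengths n (polygon_of_sides n x) = x"
proof
  fix i show "side_lengths n (polygon_of_sides n x) i = x i"
    using edge_polygon_of_sides[OF n cl, of i] xp[of i] xz[of i]
    by (cases "i < n") (simp_all add: side_lengths_def edge_def norm_mult)
qed

lemma side_lengths_eq_edge: "i < n \<Longrightarrow> side_lengths n v i = cmod (edge n v i)"
  by (simp add: side_lengths_def edge_def)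

section \<open>Similarity\<close>

lemma side_lengths_similar:
  assumes "similar_polys n v w" "0 < n"
  shows "\<exists>t>0. side_lengths n w = (\<lambda>i. t * side_lengths n v i)"
proof -
  obtain a b where a: "a \<noteq> 0" and wab: "\<And>i. i < n \<Longrightarrow> w i = a * v i + b"
    using assms unfolding similar_polys_def by blast
  have "vtx n w i = a * vtx n v i + b" for i using wab[of "i mod n"] assms by (simp add: vtx_def)
  then have "vtx n w (i+1) - vtx n w i = a * (vtx n v (i+1) - vtx n v i)" for i
    by (simp add: algebra_simps)
  then have "side_lengths n w = (\<lambda>i. cmod a * side_lengths n v i)"
    by (simp add: side_lengths_def norm_mult fun_eq_iff)
  then show ?thesis using a by (intro exI[of _ "cmod a"]) simp
qed

lemma similar_if_side_lengths_proportional: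
  assumes cv: "convex_ccw_polygon n v" "equiangular n v" and cw: "convex_ccw_polygon n w" "equiangular n w"
    and n5: "5 \<le> n" and t: "t > 0" and sw: "side_lengths n w = (\<lambda>i. t * side_lengths n v i)"
  shows "similar_polys n v w"
proof -
  obtain u where u: "cmod u = 1" and Ev: "\<And>m. edge n v m = complex_of_real (cmod (edge n v m)) * (u * cis (2*pi*real m/real n))"
    using equiangular_edges[OF cv n5] by blast
  obtain u' where u': "cmod u' = 1" and Ew: "\<And>m. edge n w m = complex_of_real (cmod (edge n w m)) * (u' * cis (2*pi*real m/real n))"
    using equiangular_edges[OF cw n5] by blast
  have cm: "cmod (edge n w m) = t * cmod (edge n v m)" for m
    using fun_cong[OF sw, of "m mod n"] n5 by (simp add: side_lengths_eq_edge edge_mod)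
  define a where "a = complex_of_real t * u' / u"
  have un: "u \<noteq> 0" using u by auto
  have Ewa: "edge n w m = a * edge n v m" for m
  proof -
    have "edge n w m = complex_of_real (t * cmod (edge n v m)) * (u' * cis (2*pi*real m/real n))"
      by (subst Ew) (simp only: cm)
    also have "\<dots> = a * edge n v m"
      by (subst (2) Ev) (simp add: a_def un field_simps)
    finally show ?thesis .
  qed
  have "w i = a * v i + (w 0 - a * v 0)" if "i < n" for i
  proof -
    have "vtx n w (0 + i) - vtx n w 0 = a * (vtx n v (0 + i) - vtx n v 0)"
      unfolding vtx_diff_sum_edges Ewa by (simp add: sum_distrib_left)
    then show ?thesis using that n5 by (simp add: vtx_def algebra_simps)
  qed
  moreover have "a \<noteq> 0" using t un u' unfolding a_def by auto
  ultimately show ?thesis unfolding similar_polys_def by blast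
qed

lemma similar_polys_iff_side_lengths:
  assumes "gutkin n k v" "equiangular n v" "gutkin n k w" "equiangular n w" "5 \<le> n"
  shows "similar_polys n v w \<longleftrightarrow> (\<exists>t>0. side_lengths n w = (\<lambda>i. t * side_lengths n v i))"
  using assms side_lengths_similar similar_if_side_lengths_proportional
  unfolding gutkin_def by (metis less_le_trans zero_less_numeral)

section \<open>The space of equiangular Gutkin polygons\<close>

definition gutkin_freqs :: "nat \<Rightarrow> nat \<Rightarrow> nat set" where
  "gutkin_freqs n k = {r. 2 \<le> r \<and> r \<le> n - 2 \<and> tan_cond n k r}"

lemma card_gutkin_freqs: "card (gutkin_freqs n k) = gutkin_M n k"
  by (simp add: gutkin_freqs_def gutkin_M_def)

lemma finite_gutkin_freqs: "finite (gutkin_freqs n k)"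
  by (rule finite_subset[of _ "{..n}"]) (auto simp: gutkin_freqs_def)

lemma gutkin_freqs_subset: "gutkin_freqs n k \<subseteq> {1..<n}"
  by (auto simp: gutkin_freqs_def)

lemma mem_gutkin_freqs_iff:
  assumes "2 \<le> k" "2 * k < n" "0 < r" "r < n"
  shows "r \<in> gutkin_freqs n k \<longleftrightarrow> gutkin_symbol n k r = 0"
  using gutkin_symbol_eq_0_iff[OF assms(1,2,4)] assms(3) by (auto simp: gutkin_freqs_def)

definition hartley_vec :: "nat \<Rightarrow> nat \<Rightarrow> nat \<Rightarrow> real" where
  "hartley_vec n r i = (if i < n then hartley n r i else 0)"

text \<open>The coefficient 1 of the constant vector fixes the perimeter to be \<open>n\<close>, selecting one
  polygon from each similarity class.\<close>

abbreviation hartley_affine :: "nat \<Rightarrow> (nat \<Rightarrow> nat) \<Rightarrow> nat \<Rightarrow> (nat \<Rightarrow> real) set" where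
  "hartley_affine n e m \<equiv> param_affine (hartley_vec n 0) (\<lambda>j. hartley_vec n (e j)) m"

lemma hartley_vecs_independent:
  fixes e :: "nat \<Rightarrow> nat" and c :: "nat \<Rightarrow> real"
  assumes inj: "inj_on e {..<m}" and e: "\<And>j. j < m \<Longrightarrow> e j < n"
    and c: "\<forall>i<n. (\<Sum>j<m. c j * hartley_vec n (e j) i) = 0" and "l < m"
  shows "c l = 0"
proof -
  have "0 = (\<Sum>i<n. (\<Sum>j<m. c j * hartley_vec n (e j) i) * hartley n (e l) i)"
    using c by simp
  also have "\<dots> = (\<Sum>i<n. \<Sum>j<m. c j * (hartley n (e j) i * hartley n (e l) i))"
    by (intro sum.cong refl) (simp add: hartley_vec_def sum_distrib_right mult.assoc)
  also have "\<dots> = (\<Sum>j<m. c j * (\<Sum>i<n. hartley n (e j) i * hartley n (e l) i))"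
    by (subst sum.swap) (simp add: sum_distrib_left)
  also have "\<dots> = (\<Sum>j<m. c j * (if j = l then real n else 0))"
    using inj \<open>l < m\<close> by (intro sum.cong refl) (auto simp: hartley_orthogonal e inj_on_def)
  also have "\<dots> = (\<Sum>j<m. if j = l then c j * real n else 0)"
    by (intro sum.cong refl) simp
  also have "\<dots> = c l * real n" using \<open>l < m\<close> by (subst sum.delta) simp_all
  finally show ?thesis using e[OF \<open>l < m\<close>] by simp
qed

lemma sum_hartley_affine:
  fixes e :: "nat \<Rightarrow> nat"
  assumes e: "\<And>j. j < m \<Longrightarrow> e j \<in> {1..<n}" and x: "x \<in> hartley_affine n e m"
  shows "(\<Sum>i<n. x i) = real n"
proof -
  obtain c where x: "x = (\<lambda>i. hartley_vec n 0 i + (\<Sum>j<m. c j * hartley_vec n (e j) i))"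
    using x unfolding param_affine_def by blast
  have "(\<Sum>i<n. x i) = (\<Sum>i<n. 1 + (\<Sum>j<m. c j * hartley n (e j) i))"
    by (intro sum.cong refl) (simp add: x hartley_vec_def)
  also have "\<dots> = real n + (\<Sum>j<m. c j * (\<Sum>i<n. hartley n (e j) i))"
    by (subst sum.distrib, subst sum.swap) (simp add: sum_distrib_left)
  also have "\<dots> = real n"
  proof -
    have "(\<Sum>i<n. hartley n (e j) i) = 0" if "j < m" for j
      using e[OF that] by (simp add: sum_hartley_eq_0)
    then show ?thesis by (simp add: sum.neutral)
  qed
  finally show ?thesis .
qed

lemma hartley_affine_scale_eq_1:
  assumes "\<And>j. j < m \<Longrightarrow> e j \<in> {1..<n}" "0 < n"
    and "x \<in> hartley_affine n e m" "(\<lambda>i. t * x i) \<in> hartley_affine n e m"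
  shows "t = 1"
  using sum_hartley_affine[OF assms(1,3)] sum_hartley_affine[OF assms(1,4)] \<open>0 < n\<close>
  by (simp add: sum_distrib_left[symmetric])

lemma hartley_inversion_sparse:
  fixes e :: "nat \<Rightarrow> nat"
  assumes e: "bij_betw e {..<m} R" and R: "R \<subseteq> {1..<n}" and "i < n"
    and vanish: "\<And>r. r < n \<Longrightarrow> r \<noteq> 0 \<Longrightarrow> r \<notin> R \<Longrightarrow> (\<Sum>j<n. f j * hartley n r j) = 0"
  shows "f i * real n = (\<Sum>j<n. f j) + (\<Sum>l<m. (\<Sum>j<n. f j * hartley n (e l) j) * hartley n (e l) i)"
proof -
  define h where "h r = (\<Sum>j<n. f j * hartley n r j)" for r
  have fin: "finite R" using R finite_subset by blast
  have "f i * real n = (\<Sum>r<n. h r * hartley n r i)"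
    using hartley_inversion[OF \<open>i < n\<close>, of f] \<open>i < n\<close> by (simp add: h_def)
  also have "\<dots> = (\<Sum>r\<in>insert 0 R. h r * hartley n r i)"
    using R vanish \<open>i < n\<close> by (intro sum.mono_neutral_right) (auto simp: h_def)
  also have "\<dots> = h 0 + (\<Sum>r\<in>R. h r * hartley n r i)"
    using fin R by (subst sum.insert) (auto simp: hartley_0)
  also have "(\<Sum>r\<in>R. h r * hartley n r i) = (\<Sum>l<m. h (e l) * hartley n (e l) i)"
    by (rule sum.reindex_bij_betw[OF e, symmetric])
  finally show ?thesis by (simp add: h_def hartley_0)
qed

lemma hartley_coeff_side_lengths_eq_0:
  assumes "gutkin n k v" "equiangular n v" "2 \<le> k" "2 * k < n"
    and "r < n" "r \<noteq> 0" "r \<notin> gutkin_freqs n k"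
  shows "(\<Sum>j<n. side_lengths n v j * hartley n r j) = 0"
  using assms by (intro hartley_coeff_eq_0 gutkin_form_side_lengths)
    (auto simp: mem_gutkin_freqs_iff)

lemma side_lengths_scaled_mem_hartley_affine:
  assumes k: "2 \<le> k" "2 * k < n" and e: "bij_betw e {..<m} (gutkin_freqs n k)"
    and v: "gutkin n k v" "equiangular n v"
  shows "\<exists>t>0. (\<lambda>i. t * side_lengths n v i) \<in> hartley_affine n e m"
proof -
  define s where "s = side_lengths n v"
  define h where "h r = (\<Sum>j<n. s j * hartley n r j)" for r
  have cv: "convex_ccw_polygon n v" using v unfolding gutkin_def by simp
  have h0: "h 0 > 0"
    using edge_nonzero[OF cv] k by (auto simp: h_def hartley_0 s_def side_lengths_eq_edge intro!: sum_pos)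
  have expand: "s i * real n = h 0 + (\<Sum>l<m. h (e l) * hartley n (e l) i)" if "i < n" for i
    using hartley_inversion_sparse[OF e gutkin_freqs_subset that, of s]
      hartley_coeff_side_lengths_eq_0[OF v k] by (simp add: h_def hartley_0 s_def)
  define t where "t = real n / h 0"
  define c where "c l = h (e l) / h 0" for l
  have "(\<lambda>i. t * s i) = (\<lambda>i. hartley_vec n 0 i + (\<Sum>l<m. c l * hartley_vec n (e l) i))"
  proof
    fix i show "t * s i = hartley_vec n 0 i + (\<Sum>l<m. c l * hartley_vec n (e l) i)"
    proof (cases "i < n")
      case True
      have "t * s i = s i * real n / h 0" by (simp add: t_def)
      then have "t * s i = (h 0 + (\<Sum>l<m. h (e l) * hartley n (e l) i)) / h 0"
        by (simp only: expand[OF True])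
      then show ?thesis
        using True h0 by (simp add: hartley_vec_def hartley_0 add_divide_distrib sum_divide_distrib c_def)
    qed (simp add: s_def side_lengths_def hartley_vec_def)
  qed
  moreover have "t > 0" using h0 k by (simp add: t_def)
  ultimately show ?thesis unfolding param_affine_def s_def by blast
qed

lemma gutkin_form_hartley_affine_eq_0:
  assumes k: "2 \<le> k" "2 * k < n" and e: "\<And>j. j < m \<Longrightarrow> e j \<in> gutkin_freqs n k"
    and x: "x \<in> hartley_affine n e m"
  shows "gutkin_form n k x i = 0"
proof -
  have n: "0 < n" using k by simp
  obtain c where x: "x = (\<lambda>i. hartley_vec n 0 i + (\<Sum>j<m. c j * hartley_vec n (e j) i))"
    using x unfolding param_affine_def by blast
  have x_mod: "x (l mod n) = hartley n 0 l + (\<Sum>j<m. c j * hartley n (e j) l)" for l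
    using n by (simp add: x hartley_vec_def hartley_mod)
  have "gutkin_form n k x i = gutkin_form n k (hartley n 0) i + (\<Sum>j<m. c j * gutkin_form n k (hartley n (e j)) i)"
    unfolding gutkin_form_def x_mod
    by (simp add: hartley_mod[OF n] distrib_left sum.distrib sum_distrib_left mult_ac)
      (rule sum.swap)
  also have "\<dots> = 0"
  proof -
    have "gutkin_form n k (hartley n 0) i = 0"
      using gutkin_symbol_eq_0_iff[OF k n] by (intro gutkin_form_hartley[OF n]) simp
    moreover have "gutkin_form n k (hartley n (e j)) i = 0" if "j < m" for j
      using e[OF that] gutkin_freqs_subset[of n k] mem_gutkin_freqs_iff[OF k, of "e j"]
      by (intro gutkin_form_hartley[OF n]) auto
    ultimately show ?thesis by (simp add: sum.neutral)
  qed
  finally show ?thesis .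
qed

lemma closing_if_gutkin_form_eq_0:
  assumes k: "2 \<le> k" "2 * k < n" and g: "\<And>i. i < n \<Longrightarrow> gutkin_form n k x i = 0"
  shows "(\<Sum>j<n. complex_of_real (x j) * cis (2*pi*real j/real n)) = 0"
proof -
  have n: "0 < n" using k by simp
  have rotate: "cis (-2*pi*real (n - 1)*real i/real n) = cis (2*pi*real i/real n)" for i
  proof -
    have "-2*pi*real (n - 1)*real i/real n = 2*pi*real i/real n + 2*pi*of_int (- int i)"
      using n by (simp add: of_nat_diff field_simps)
    then show ?thesis by (simp only: cis_add_2pi_int)
  qed
  have "(\<Sum>i<n. complex_of_real (gutkin_form n k x i) * cis (-2*pi*real (n - 1)*real i/real n)) = 0"
    by (simp add: g)
  then have "gutkin_symbol n k (n - 1) * (\<Sum>i<n. complex_of_real (x i) * cis (-2*pi*real (n - 1)*real i/real n)) = 0"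
    by (simp only: dft_gutkin_form[OF n])
  then have "gutkin_symbol n k (n - 1) * (\<Sum>i<n. complex_of_real (x i) * cis (2*pi*real i/real n)) = 0"
    by (simp only: rotate)
  moreover have "gutkin_symbol n k (n - 1) \<noteq> 0"
    using gutkin_symbol_eq_0_iff[OF k, of "n - 1"] k by simp
  ultimately show ?thesis by simp
qed

lemma gutkin_polygon_of_hartley_affine:
  assumes k: "2 \<le> k" "2 * k < n" and e: "\<And>j. j < m \<Longrightarrow> e j \<in> gutkin_freqs n k"
    and x: "x \<in> hartley_affine n e m" and pos: "\<forall>i<n. x i > 0"
  shows "\<exists>v. gutkin n k v \<and> equiangular n v \<and> side_lengths n v = x"
proof (intro exI conjI)
  have n: "0 < n" using k by simp
  have g: "gutkin_form n k x i = 0" for i by (rule gutkin_form_hartley_affine_eq_0[OF k e x])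
  have cl: "(\<Sum>j<n. complex_of_real (x j) * cis (2*pi*real j/real n)) = 0"
    using closing_if_gutkin_form_eq_0[OF k g] .
  have "x i = 0" if "n \<le> i" for i
    using x that by (auto simp: param_affine_def hartley_vec_def)
  then show "side_lengths n (polygon_of_sides n x) = x"
    using side_lengths_polygon_of_sides[OF n _ cl] pos by blast
  show "gutkin n k (polygon_of_sides n x)" using gutkin_polygon_of_sides[OF k _ cl g] pos by blast
  show "equiangular n (polygon_of_sides n x)" using equiangular_polygon_of_sides[OF n _ cl] pos by blast
qed

theorem mainTheorem12:
  fixes n k :: nat
  assumes "2 \<le> k" and "2 * k < n"
  shows "\<exists>(p :: nat \<Rightarrow> real) (b :: nat \<Rightarrow> nat \<Rightarrow> real).
     (\<forall>i\<ge>n. p i = 0) \<and> (\<forall>j<gutkin_M n k. \<forall>i\<ge>n. b j i = 0) \<and>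
     (\<forall>c :: nat \<Rightarrow> real. (\<forall>i<n. (\<Sum>j<gutkin_M n k. c j * b j i) = 0) \<longrightarrow>
         (\<forall>j<gutkin_M n k. c j = 0)) \<and>
     (\<forall>v. gutkin n k v \<and> equiangular n v \<longrightarrow>
         (\<exists>t>0. (\<lambda>i. t * side_lengths n v i) \<in> param_affine p b (gutkin_M n k))) \<and>
     (\<forall>x\<in>param_affine p b (gutkin_M n k). (\<forall>i<n. x i > 0) \<longrightarrow>
         (\<exists>v. gutkin n k v \<and> equiangular n v \<and> side_lengths n v = x)) \<and>
     (\<forall>x\<in>param_affine p b (gutkin_M n k). \<forall>t>0.
         (\<lambda>i. t * x i) \<in> param_affine p b (gutkin_M n k) \<longrightarrow> t = 1) \<and>
     (\<forall>v w. gutkin n k v \<and> equiangular n v \<longrightarrow> gutkin n k w \<and> equiangular n w \<longrightarrow>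
         (similar_polys n v w \<longleftrightarrow> (\<exists>t>0. side_lengths n w = (\<lambda>i. t * side_lengths n v i))))"
proof -
  obtain e where e: "bij_betw e {..<gutkin_M n k} (gutkin_freqs n k)"
    using ex_bij_betw_nat_finite[OF finite_gutkin_freqs] card_gutkin_freqs
    by (metis atLeast0LessThan)
  have e_freq: "e j \<in> gutkin_freqs n k" if "j < gutkin_M n k" for j
    using e that by (auto simp: bij_betw_def)
  then have e_range: "e j \<in> {1..<n}" if "j < gutkin_M n k" for j
    using gutkin_freqs_subset that by blast
  show ?thesis
  proof (intro exI[of _ "hartley_vec n 0"] exI[of _ "\<lambda>j. hartley_vec n (e j)"] conjI allI impI ballI)
    show "c j = 0" if "\<forall>i<n. (\<Sum>j<gutkin_M n k. c j * hartley_vec n (e j) i) = 0" "j < gutkin_M n k" for c j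
      using hartley_vecs_independent[OF bij_betw_imp_inj_on[OF e]] e_range that by auto
    show "\<exists>t>0. (\<lambda>i. t * side_lengths n v i) \<in> hartley_affine n e (gutkin_M n k)"
      if "gutkin n k v \<and> equiangular n v" for v
      using side_lengths_scaled_mem_hartley_affine[OF assms e] that by blast
    show "\<exists>v. gutkin n k v \<and> equiangular n v \<and> side_lengths n v = x"
      if "x \<in> hartley_affine n e (gutkin_M n k)" "\<forall>i<n. x i > 0" for x
      using gutkin_polygon_of_hartley_affine[OF assms e_freq that] by blast
    show "t = 1" if "x \<in> hartley_affine n e (gutkin_M n k)" "t > 0"
      "(\<lambda>i. t * x i) \<in> hartley_affine n e (gutkin_M n k)" for x t
      using hartley_affine_scale_eq_1[OF e_range _ that(1,3)] assms by simp
    show "similar_polys n v w \<longleftrightarrow> (\<exists>t>0. side_lengths n w = (\<lambda>i. t * side_lengths n v i))"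
      if "gutkin n k v \<and> equiangular n v" "gutkin n k w \<and> equiangular n w" for v w
      using similar_polys_iff_side_lengths that assms by auto
  qed (simp_all add: hartley_vec_def)
qed

end
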